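(* For any partition $\lambda$ of $n$, $$F_{\lambda^\vee}\,\omega_{\pi_\lambda^{-1}}\,E_\lambda=F_{\lambda^\vee}\,\overline{\omega}_{\pi_\lambda^{-1}}\,E_\lambda=F_{\lambda^\vee}\,\omega_{\pi_\lambda}^{-1}\,E_\lambda,$$ where $\overline{\omega}_{\pi_\lambda^{-1}}$ is the braid obtained from $\omega_{\pi_\lambda^{-1}}$ by switching all of its crossings.
   Context: $H_n$ is the Hecke algebra over a ring $R\ni q^{\pm1}$ generated by $\sigma_1,\dots,\sigma_{n-1}$ with braid relations and $(\sigma_i-q)(\sigma_i+q^{-1})=0$, realized as the HOMFLY-PT skein of $n$-tangles (skein relation: positive crossing minus negative crossing equals $(q-q^{-1})$ times smoothing; product $xy$ = $x$ placed above $y$). $\omega_\pi$ is the positive permutation braid of $\pi\in S_n$ (all crossings positive, each pair of strings crosses at most once, string from top point $i$ ends at bottom point $\pi(i)$), $\ell(\pi)$ its length. $a_k=\sum_{\pi\in S_k}q^{\ell(\pi)}\omega_\pi$, $b_k=\sum_{\pi\in S_k}(-q)^{-\ell(\pi)}\omega_\pi$; for a partition $\lambda=(\lambda_1,\dots,\lambda_l)$ of $n$, $E_\lambda=a_{\lambda_1}\otimes\cdots\otimes a_{\lambda_l}$, $F_\lambda=b_{\lambda_1}\otimes\cdots\otimes b_{\lambda_l}$ (side-by-side juxtaposition on consecutive blocks of strands). $\lambda^\vee$ is the conjugate partition. $T(\lambda)$ numbers the cells of the Young diagram of $\lambda$ by $1,\dots,n$ along rows; $\pi_\lambda\in S_n$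 is defined by $\pi_\lambda(i)=j$ when transposing the diagram carries cell $i$ of $T(\lambda)$ to cell $j$ of $T(\lambda^\vee)$. *)

theory Defs
  imports "HOL-Combinatorics.Permutations"
begin

text \<open>Hecke algebra H_n presented by generators sigma_1..sigma_(n-1) in an arbitrary ring
  (universal formulation). Strand positions are 1..n; permutations of {1..n}.\<close>

definition sswap :: "nat \<Rightarrow> nat \<Rightarrow> nat" where
  "sswap i j = (if j = i then i + 1 else if j = i + 1 then i else j)"

text \<open>Permutation realised by the braid word [i1,...,ik] = sigma_i1 * ... * sigma_ik
  (sigma_i1 on top): string from top point j ends at bottom point (s_ik o ... o s_i1) j.\<close>
definition perm_of_word :: "nat list \<Rightarrow> nat \<Rightarrow> nat" where
  "perm_of_word w = fold (\<lambda>i f. sswap i \<circ> f) w id"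

definition inv_len :: "nat \<Rightarrow> (nat \<Rightarrow> nat) \<Rightarrow> nat" where
  "inv_len n p = card {(i, j). 1 \<le> i \<and> i < j \<and> j \<le> n \<and> p j < p i}"

definition reduced_word :: "nat \<Rightarrow> (nat \<Rightarrow> nat) \<Rightarrow> nat list \<Rightarrow> bool" where
  "reduced_word n p w \<longleftrightarrow> (\<forall>i\<in>set w. 1 \<le> i \<and> i < n) \<and> length w = inv_len n p
     \<and> perm_of_word w = p"

definition rword :: "nat \<Rightarrow> (nat \<Rightarrow> nat) \<Rightarrow> nat list" where
  "rword n p = (SOME w. reduced_word n p w)"

text \<open>Positive permutation braid omega_p (g = sigma), or the braid with all crossings
  switched (g = sigma inverse).\<close>
definition pbraid :: "(nat \<Rightarrow> 'a::ring_1) \<Rightarrow> nat \<Rightarrow> (nat \<Rightarrow> nat) \<Rightarrow> 'a" where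
  "pbraid g n p = prod_list (map g (rword n p))"

definition shift_perm :: "nat \<Rightarrow> nat \<Rightarrow> (nat \<Rightarrow> nat) \<Rightarrow> nat \<Rightarrow> nat" where
  "shift_perm m k p i = (if m < i \<and> i \<le> m + k then p (i - m) + m else i)"

definition a_block :: "(nat \<Rightarrow> 'a::ring_1) \<Rightarrow> 'a \<Rightarrow> nat \<Rightarrow> nat \<Rightarrow> nat \<Rightarrow> 'a" where
  "a_block \<sigma> q n m k = (\<Sum>p\<in>{p. p permutes {1..k}}. q ^ inv_len k p * pbraid \<sigma> n (shift_perm m k p))"

definition b_block :: "(nat \<Rightarrow> 'a::ring_1) \<Rightarrow> 'a \<Rightarrow> nat \<Rightarrow> nat \<Rightarrow> nat \<Rightarrow> 'a" where
  "b_block \<sigma> qi n m k = (\<Sum>p\<in>{p. p permutes {1..k}}. (- qi) ^ inv_len k p * pbraid \<sigma> n (shift_perm m k p))"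

fun blocks :: "(nat \<Rightarrow> nat \<Rightarrow> 'a::ring_1) \<Rightarrow> nat \<Rightarrow> nat list \<Rightarrow> 'a" where
  "blocks f m [] = 1"
| "blocks f m (k # ks) = f m k * blocks f (m + k) ks"

definition E_part :: "(nat \<Rightarrow> 'a::ring_1) \<Rightarrow> 'a \<Rightarrow> nat \<Rightarrow> nat list \<Rightarrow> 'a" where
  "E_part \<sigma> q n lam = blocks (a_block \<sigma> q n) 0 lam"

definition F_part :: "(nat \<Rightarrow> 'a::ring_1) \<Rightarrow> 'a \<Rightarrow> nat \<Rightarrow> nat list \<Rightarrow> 'a" where
  "F_part \<sigma> qi n lam = blocks (b_block \<sigma> qi n) 0 lam"

definition is_partition :: "nat \<Rightarrow> nat list \<Rightarrow> bool" where
  "is_partition n lam \<longleftrightarrow> sum_list lam = n \<and> sorted_wrt (\<ge>) lam \<and> 0 \<notin> set lam"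

definition conj_part :: "nat list \<Rightarrow> nat list" where
  "conj_part lam = map (\<lambda>j. length (filter (\<lambda>x. j \<le> x) lam)) [1..<Suc (fold max lam 0)]"

text \<open>Cell (r,c) (row r, column c, 1-based) of the Young diagram; its number in T(lam).\<close>
definition is_cell :: "nat list \<Rightarrow> nat \<Rightarrow> nat \<Rightarrow> bool" where
  "is_cell lam r c \<longleftrightarrow> 1 \<le> r \<and> r \<le> length lam \<and> 1 \<le> c \<and> c \<le> lam ! (r - 1)"

definition cell_num :: "nat list \<Rightarrow> nat \<Rightarrow> nat \<Rightarrow> nat" where
  "cell_num lam r c = sum_list (take (r - 1) lam) + c"

definition pi_part :: "nat list \<Rightarrow> nat \<Rightarrow> nat" where
  "pi_part lam i = (if \<exists>r c. is_cell lam r c \<and> i = cell_num lam r c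
     then (THE j. \<exists>r c. is_cell lam r c \<and> i = cell_num lam r c \<and> j = cell_num (conj_part lam) c r)
     else i)"

end

theory Submission
  imports Defs
begin

text \<open>
  Write \<open>F = F_part \<sigma> qi n (conj_part lam)\<close>, \<open>E = E_part \<sigma> q n lam\<close> and \<open>w = inv (pi_part lam)\<close>.
  Each block factor of \<open>E\<close> has a left factor \<open>1 + q \<sigma> b\<close> and each block factor of \<open>F\<close>
  a right factor \<open>1 - qi \<sigma> a\<close> for every pair of strands \<open>b, b + 1\<close> (resp. \<open>a, a + 1\<close>)
  inside one block; hence \<open>\<sigma> b E = q E\<close>, \<open>F \<sigma> a = - qi F\<close>, and
  \<open>(1 - qi \<sigma>) (1 + q \<sigma>) = 0\<close> kills \<open>F T y E\<close> whenever \<open>y\<close> carries such a pair \<open>a, a + 1\<close> onto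
  such a pair \<open>b, b + 1\<close>. Inducting on the length of \<open>y\<close>, these three rules show that \<open>F T y E = 0\<close>
  unless \<open>y\<close> is the unique permutation to which none of them applies, and this is \<open>w\<close>,
  which sends cell \<open>(c, i)\<close> of the conjugate diagram to cell \<open>(i, c)\<close>. In particular
  \<open>F T y E = 0\<close> for all \<open>y\<close> shorter than \<open>w\<close>. Switching the crossings of a reduced word of \<open>w\<close>,
  i.e. replacing \<open>\<sigma> i\<close> by \<open>\<sigma> i - (q - qi)\<close>, changes \<open>T w\<close> only by such shorter terms, which
  gives the first equation; the second holds because the switched braid of \<open>w\<close> is the inverse
  of \<open>T (pi_part lam)\<close>, by Matsumoto's theorem applied to the reversed reduced word.
\<close>

section \<open>Permutations, length and reduced words\<close>

lemma sswap_eq_transpose: "sswap i = transpose i (i + 1)"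
  by (simp add: fun_eq_iff sswap_def transpose_def)

lemma sswap_sswap [simp]: "sswap i (sswap i j) = j"
  by (simp add: sswap_def)

lemma sswap_comp_sswap [simp]: "sswap i \<circ> sswap i = id"
  by (simp add: sswap_eq_transpose)

lemma inv_sswap: "inv (sswap i) = sswap i"
  by (simp add: sswap_eq_transpose)

lemma bij_sswap: "bij (sswap i)"
  by (simp add: sswap_eq_transpose)

lemma permutes_sswap: "1 \<le> i \<Longrightarrow> i < n \<Longrightarrow> sswap i permutes {1..n}"
  unfolding sswap_eq_transpose by (rule permutes_swap_id) auto

lemma permutes_comp_sswap:
  "p permutes {1..n} \<Longrightarrow> 1 \<le> i \<Longrightarrow> i < n \<Longrightarrow> p \<circ> sswap i permutes {1..n}"
  by (intro permutes_compose permutes_sswap)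

lemma permutes_sswap_comp:
  "p permutes {1..n} \<Longrightarrow> 1 \<le> i \<Longrightarrow> i < n \<Longrightarrow> sswap i \<circ> p permutes {1..n}"
  by (intro permutes_compose permutes_sswap)

lemma inv_sswap_comp: "bij p \<Longrightarrow> inv (sswap i \<circ> p) = inv p \<circ> sswap i"
  by (simp add: o_inv_distrib bij_sswap inv_sswap)

lemma sswap_commute: "i + 1 < j \<Longrightarrow> sswap i \<circ> sswap j = sswap j \<circ> sswap i"
  by (auto simp: fun_eq_iff sswap_def)

lemma sswap_braid: "sswap i \<circ> sswap (i + 1) \<circ> sswap i = sswap (i + 1) \<circ> sswap i \<circ> sswap (i + 1)"
  by (auto simp: fun_eq_iff sswap_def)

lemma comp_sswap_eq_sswap_comp:
  assumes "bij y" "y a = b" "y (a + 1) = b + 1"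
  shows "y \<circ> sswap a = sswap b \<circ> y"
proof (rule ext)
  fix z
  have "y z = b \<longleftrightarrow> z = a" "y z = b + 1 \<longleftrightarrow> z = a + 1"
    using assms(2,3) bij_is_inj[OF assms(1)] by (metis injD)+
  then show "(y \<circ> sswap a) z = (sswap b \<circ> y) z"
    using assms(2,3) by (simp add: sswap_def)
qed

lemma perm_of_word_Nil [simp]: "perm_of_word [] = id"
  by (simp add: perm_of_word_def)

lemma perm_of_word_Cons: "perm_of_word (i # w) = perm_of_word w \<circ> sswap i"
proof -
  have "fold (\<lambda>i f. sswap i \<circ> f) w g = perm_of_word w \<circ> g" for g
    unfolding perm_of_word_def by (induction w rule: rev_induct) (auto simp: comp_assoc)
  then show ?thesis
    unfolding perm_of_word_def by simp
qed

lemma perm_of_word_snoc: "perm_of_word (w @ [i]) = sswap i \<circ> perm_of_word w"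
  by (simp add: perm_of_word_def)

lemma perm_of_word_rev_comp: "perm_of_word (rev w) \<circ> perm_of_word w = id"
proof (induction w)
  case (Cons i w)
  have "perm_of_word (rev (i # w)) \<circ> perm_of_word (i # w)
      = sswap i \<circ> (perm_of_word (rev w) \<circ> perm_of_word w) \<circ> sswap i"
    by (simp add: perm_of_word_snoc perm_of_word_Cons comp_assoc)
  then show ?case
    using Cons.IH by simp
qed simp

lemma inv_perm_of_word: "inv (perm_of_word w) = perm_of_word (rev w)"
  using perm_of_word_rev_comp[of w] perm_of_word_rev_comp[of "rev w"]
  by (intro inv_unique_comp) simp_all

lemma permutes_perm_of_word:
  "\<forall>i\<in>set w. 1 \<le> i \<and> i < n \<Longrightarrow> perm_of_word w permutes {1..n}"
proof (induction w)
  case (Cons i w)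
  then show ?case
    unfolding perm_of_word_Cons by (intro permutes_comp_sswap) auto
qed (simp add: permutes_id)

lemma permutes_apply_Suc_neq:
  fixes i :: nat
  assumes "p permutes S"
  shows "p (i + 1) \<noteq> p i"
proof
  assume "p (i + 1) = p i"
  then have "i + 1 = i"
    by (rule injD[OF permutes_inj[OF assms]])
  then show False
    by simp
qed

definition inversions :: "nat \<Rightarrow> (nat \<Rightarrow> nat) \<Rightarrow> (nat \<times> nat) set" where
  "inversions n p = {(i, j). 1 \<le> i \<and> i < j \<and> j \<le> n \<and> p j < p i}"

lemma finite_inversions: "finite (inversions n p)"
  by (rule finite_subset[of _ "{1..n} \<times> {1..n}"]) (auto simp: inversions_def)

lemma inv_len_eq_card_inversions: "inv_len n p = card (inversions n p)"
  by (simp add: inv_len_def inversions_def)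

lemma inv_len_id [simp]: "inv_len n id = 0"
  by (auto simp: inv_len_def card_eq_0_iff)

lemma inversions_comp_sswap_ascent:
  assumes "1 \<le> a" "a < n" "p a < p (a + 1)"
  shows "inversions n (p \<circ> sswap a)
    = insert (a, a + 1) ((\<lambda>(i, j). (sswap a i, sswap a j)) ` inversions n p)"
proof -
  let ?s = "sswap a"
  have order: "?s i < ?s j" if "i < j" "(i, j) \<noteq> (a, a + 1)" for i j
    using that by (auto simp: sswap_def)
  have range: "1 \<le> ?s i" "i \<le> n \<Longrightarrow> ?s i \<le> n" if "1 \<le> i" for i
    using that assms(1,2) by (auto simp: sswap_def)
  show ?thesis
  proof (intro equalityI subsetI)
    fix x assume x: "x \<in> inversions n (p \<circ> ?s)"
    obtain i j where ij: "x = (i, j)" by (cases x)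
    show "x \<in> insert (a, a + 1) ((\<lambda>(i, j). (?s i, ?s j)) ` inversions n p)"
    proof (cases "x = (a, a + 1)")
      case False
      then have "(?s i, ?s j) \<in> inversions n p"
        using x ij order[of i j] range[of i] range[of j] by (auto simp: inversions_def)
      then show ?thesis
        using ij by force
    qed simp
  next
    fix x assume x: "x \<in> insert (a, a + 1) ((\<lambda>(i, j). (?s i, ?s j)) ` inversions n p)"
    show "x \<in> inversions n (p \<circ> ?s)"
    proof (cases "x = (a, a + 1)")
      case False
      then obtain i j where ij: "(i, j) \<in> inversions n p" "x = (?s i, ?s j)"
        using x by auto
      then have "(i, j) \<noteq> (a, a + 1)"
        using assms(3) by (auto simp: inversions_def)
      then show ?thesis
        using ij order[of i j] range[of i] range[of j] by (auto simp: inversions_def)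
    qed (use assms in \<open>auto simp: inversions_def sswap_def\<close>)
  qed
qed

lemma inv_len_comp_sswap_ascent:
  assumes "1 \<le> a" "a < n" "p a < p (a + 1)"
  shows "inv_len n (p \<circ> sswap a) = Suc (inv_len n p)"
proof -
  let ?f = "\<lambda>(i, j). (sswap a i, sswap a j)"
  have "(a, a + 1) \<notin> ?f ` inversions n p"
  proof
    assume "(a, a + 1) \<in> ?f ` inversions n p"
    then obtain i j where "(i, j) \<in> inversions n p" "sswap a i = a" "sswap a j = a + 1"
      by auto
    then show False
      by (auto simp: inversions_def sswap_def split: if_splits)
  qed
  moreover have "inj_on ?f (inversions n p)"
    by (rule inj_onI) (auto simp: sswap_def split: if_splits)
  ultimately show ?thesis
    unfolding inv_len_eq_card_inversions inversions_comp_sswap_ascent[OF assms]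
    by (simp add: finite_inversions card_image)
qed

lemma inv_len_comp_sswap_descent:
  assumes "1 \<le> a" "a < n" "p (a + 1) < p a"
  shows "Suc (inv_len n (p \<circ> sswap a)) = inv_len n p"
  using inv_len_comp_sswap_ascent[of a n "p \<circ> sswap a"] assms
  by (simp add: comp_assoc sswap_def)

lemma inv_len_inv:
  assumes p: "p permutes {1..n}"
  shows "inv_len n (inv p) = inv_len n p"
proof -
  have in_range: "p i \<in> {1..n} \<longleftrightarrow> i \<in> {1..n}" "inv p i \<in> {1..n} \<longleftrightarrow> i \<in> {1..n}" for i
    using permutes_in_image[OF p] permutes_in_image[OF permutes_inv[OF p]] by blast+
  have inverses: "inv p (p i) = i" "p (inv p i) = i" for i
    using permutes_inverses[OF p] by blast+
  have "bij_betw (\<lambda>(i, j). (p j, p i)) (inversions n p) (inversions n (inv p))"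
  proof (rule bij_betw_byWitness[where f' = "\<lambda>(i, j). (inv p j, inv p i)"])
    show "(\<lambda>(i, j). (p j, p i)) ` inversions n p \<subseteq> inversions n (inv p)"
      using in_range(1) by (fastforce simp: inversions_def inverses)
    show "(\<lambda>(i, j). (inv p j, inv p i)) ` inversions n (inv p) \<subseteq> inversions n p"
      using in_range(2) by (fastforce simp: inversions_def inverses)
  qed (auto simp: inverses)
  then show ?thesis
    by (simp add: inv_len_eq_card_inversions bij_betw_same_card)
qed

lemma inv_len_sswap_comp_ascent:
  assumes p: "p permutes {1..n}" and "1 \<le> a" "a < n" "inv p a < inv p (a + 1)"
  shows "inv_len n (sswap a \<circ> p) = Suc (inv_len n p)"
proof -
  have "inv_len n (sswap a \<circ> p) = inv_len n (inv p \<circ> sswap a)"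
    using inv_len_inv[OF permutes_sswap_comp[OF p]] assms(2,3)
    by (simp add: inv_sswap_comp permutes_bij[OF p])
  also have "\<dots> = Suc (inv_len n p)"
    using inv_len_comp_sswap_ascent[of a n "inv p"] inv_len_inv[OF p] assms by simp
  finally show ?thesis .
qed

lemma inv_len_sswap_comp_descent:
  assumes p: "p permutes {1..n}" and "1 \<le> a" "a < n" "inv p (a + 1) < inv p a"
  shows "Suc (inv_len n (sswap a \<circ> p)) = inv_len n p"
proof -
  have "inv (sswap a \<circ> p) a < inv (sswap a \<circ> p) (a + 1)"
    using assms(4) by (simp add: inv_sswap_comp permutes_bij[OF p] sswap_def)
  from inv_len_sswap_comp_ascent[OF permutes_sswap_comp[OF p assms(2,3)] assms(2,3) this]
  show ?thesis
    by (simp add: comp_assoc[symmetric])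
qed

lemma permutes_ascending_eq_id:
  fixes p :: "nat \<Rightarrow> nat"
  assumes p: "p permutes {1..n}" and asc: "\<forall>a. 1 \<le> a \<and> a < n \<longrightarrow> p a < p (a + 1)"
  shows "p = id"
proof -
  have climb: "p i + d \<le> p (i + d)" if "1 \<le> i" "i + d \<le> n" for i d
    using that
  proof (induction d)
    case (Suc d)
    then show ?case
      using asc[rule_format, of "i + d"] by simp
  qed simp
  have range: "p i \<in> {1..n}" if "i \<in> {1..n}" for i
    using permutes_in_image[OF p] that by blast
  show ?thesis
  proof
    fix x
    show "p x = id x"
    proof (cases "x \<in> {1..n}")
      case True
      then show ?thesis
        using climb[of x "n - x"] climb[of 1 "x - 1"] range[of 1] range[of n] by auto
    qed (simp add: permutes_not_in[OF p])
  qed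
qed

lemma inv_len_perm_of_word_le:
  "\<forall>i\<in>set w. 1 \<le> i \<and> i < n \<Longrightarrow> inv_len n (perm_of_word w) \<le> length w"
proof (induction w)
  case (Cons a w)
  let ?p = "perm_of_word w"
  have a: "1 \<le> a" "a < n"
    using Cons.prems by auto
  have IH: "inv_len n ?p \<le> length w"
    using Cons by simp
  have "?p (a + 1) \<noteq> ?p a"
    using permutes_apply_Suc_neq[OF permutes_perm_of_word] Cons.prems by auto
  then consider "?p a < ?p (a + 1)" | "?p (a + 1) < ?p a"
    by linarith
  then show ?case
  proof cases
    case 1
    then show ?thesis
      using IH inv_len_comp_sswap_ascent[OF a 1] unfolding perm_of_word_Cons length_Cons by linarith
  next
    case 2
    then show ?thesis
      using IH inv_len_comp_sswap_descent[OF a 2] unfolding perm_of_word_Cons length_Cons by linarith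
  qed
qed simp

lemma reduced_word_permutes: "reduced_word n p w \<Longrightarrow> p permutes {1..n}"
  unfolding reduced_word_def using permutes_perm_of_word by blast

lemma reduced_word_ConsD:
  assumes "reduced_word n p (i # u)"
  shows "p (i + 1) < p i" "reduced_word n (p \<circ> sswap i) u"
proof -
  have i: "1 \<le> i" "i < n" and letters: "\<forall>j\<in>set u. 1 \<le> j \<and> j < n"
    and len: "length u + 1 = inv_len n p" and pu: "perm_of_word u = p \<circ> sswap i"
    using assms by (auto simp: reduced_word_def perm_of_word_Cons comp_assoc)
  have "p (i + 1) \<noteq> p i"
    using permutes_apply_Suc_neq[OF reduced_word_permutes[OF assms]] .
  moreover have "inv_len n (p \<circ> sswap i) \<le> length u"
    using inv_len_perm_of_word_le[OF letters] pu by simp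
  ultimately show desc: "p (i + 1) < p i"
    using inv_len_comp_sswap_ascent[OF i, of p] len by linarith
  show "reduced_word n (p \<circ> sswap i) u"
    using inv_len_comp_sswap_descent[OF i desc] letters len pu by (simp add: reduced_word_def)
qed

lemma reduced_word_ConsI:
  assumes "1 \<le> i" "i < n" "p (i + 1) < p i" "reduced_word n (p \<circ> sswap i) u"
  shows "reduced_word n p (i # u)"
  using inv_len_comp_sswap_descent[OF assms(1-3)] assms
  by (auto simp: reduced_word_def perm_of_word_Cons comp_assoc)

lemma reduced_word_snocI:
  assumes p: "p permutes {1..n}" and "1 \<le> i" "i < n" "inv p i < inv p (i + 1)"
    and "reduced_word n p w"
  shows "reduced_word n (sswap i \<circ> p) (w @ [i])"
  using inv_len_sswap_comp_ascent[OF assms(1-4)] assms(2,3,5)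
  by (auto simp: reduced_word_def perm_of_word_snoc)

lemma reduced_word_exists: "p permutes {1..n} \<Longrightarrow> \<exists>w. reduced_word n p w"
proof (induction "inv_len n p" arbitrary: p rule: less_induct)
  case less
  show ?case
  proof (cases "\<exists>a. 1 \<le> a \<and> a < n \<and> p (a + 1) < p a")
    case True
    then obtain a where a: "1 \<le> a" "a < n" "p (a + 1) < p a"
      by blast
    obtain u where "reduced_word n (p \<circ> sswap a) u"
      using less.hyps[OF _ permutes_comp_sswap[OF less.prems a(1,2)]]
        inv_len_comp_sswap_descent[OF a] by force
    then show ?thesis
      using reduced_word_ConsI[OF a] by blast
  next
    case False
    have "p (a + 1) \<noteq> p a" for a
      using permutes_apply_Suc_neq[OF less.prems] .
    then have "p = id"
      using False permutes_ascending_eq_id[OF less.prems] by (meson linorder_neqE_nat)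
    then have "reduced_word n p []"
      by (simp add: reduced_word_def)
    then show ?thesis ..
  qed
qed

lemma reduced_word_rword: "p permutes {1..n} \<Longrightarrow> reduced_word n p (rword n p)"
  unfolding rword_def using reduced_word_exists by (rule someI_ex)

lemma reduced_word_rev:
  assumes "reduced_word n p w"
  shows "reduced_word n (inv p) (rev w)"
  using assms inv_len_inv[OF reduced_word_permutes[OF assms]]
  by (auto simp: reduced_word_def inv_perm_of_word)

lemma reduced_words_commute_witness:
  assumes "reduced_word n p (i # u)" "reduced_word n p (j # v)" "i + 1 < j"
  obtains r where "reduced_word n (p \<circ> sswap i) (j # r)" "reduced_word n (p \<circ> sswap j) (i # r)"
proof -
  have p: "p permutes {1..n}"
    using reduced_word_permutes[OF assms(1)] .
  have i: "1 \<le> i" "i < n" and j: "1 \<le> j" "j < n"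
    using assms by (auto simp: reduced_word_def)
  have di: "p (i + 1) < p i" and dj: "p (j + 1) < p j"
    using assms(1,2) by (auto dest: reduced_word_ConsD)
  let ?r = "rword n (p \<circ> sswap i \<circ> sswap j)"
  have r: "reduced_word n (p \<circ> sswap i \<circ> sswap j) ?r"
    by (intro reduced_word_rword permutes_comp_sswap p i j)
  have "p \<circ> sswap i \<circ> sswap j = p \<circ> sswap j \<circ> sswap i"
    using sswap_commute[OF assms(3)] by (simp add: comp_assoc)
  then have "reduced_word n (p \<circ> sswap i) (j # ?r)" "reduced_word n (p \<circ> sswap j) (i # ?r)"
    using assms(3) r di dj i j by (auto intro!: reduced_word_ConsI simp: sswap_def)
  then show ?thesis ..
qed

lemma reduced_words_braid_witness:
  assumes "reduced_word n p (i # u)" "reduced_word n p ((i + 1) # v)"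
  obtains r where "reduced_word n (p \<circ> sswap i) ((i + 1) # i # r)"
    "reduced_word n (p \<circ> sswap (i + 1)) (i # (i + 1) # r)"
proof -
  have p: "p permutes {1..n}"
    using reduced_word_permutes[OF assms(1)] .
  have i: "1 \<le> i" "i + 1 < n"
    using assms by (auto simp: reduced_word_def)
  have di: "p (i + 1) < p i" and dj: "p (i + 2) < p (i + 1)"
    using assms by (auto dest: reduced_word_ConsD)
  let ?p3 = "p \<circ> sswap i \<circ> sswap (i + 1) \<circ> sswap i"
  let ?r = "rword n ?p3"
  have r: "reduced_word n ?p3 ?r"
    using i by (intro reduced_word_rword permutes_comp_sswap p) auto
  have "?p3 = p \<circ> sswap (i + 1) \<circ> sswap i \<circ> sswap (i + 1)"
    using sswap_braid[of i] by (simp add: comp_assoc)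
  then have r': "reduced_word n (p \<circ> sswap (i + 1) \<circ> sswap i \<circ> sswap (i + 1)) ?r"
    using r by simp
  have a: "reduced_word n (p \<circ> sswap i \<circ> sswap (i + 1)) (i # ?r)"
    by (rule reduced_word_ConsI) (use i di dj r in \<open>auto simp: sswap_def\<close>)
  have 1: "reduced_word n (p \<circ> sswap i) ((i + 1) # i # ?r)"
    by (rule reduced_word_ConsI) (use i di dj a in \<open>auto simp: sswap_def\<close>)
  have b: "reduced_word n (p \<circ> sswap (i + 1) \<circ> sswap i) ((i + 1) # ?r)"
    by (rule reduced_word_ConsI) (use i di dj r' in \<open>auto simp: sswap_def\<close>)
  have 2: "reduced_word n (p \<circ> sswap (i + 1)) (i # (i + 1) # ?r)"
    by (rule reduced_word_ConsI) (use i di dj b in \<open>auto simp: sswap_def\<close>)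
  from 1 2 show ?thesis ..
qed

section \<open>Matsumoto's theorem\<close>

definition word_prod :: "(nat \<Rightarrow> 'a::monoid_mult) \<Rightarrow> nat list \<Rightarrow> 'a" where
  "word_prod g w = prod_list (map g w)"

lemma word_prod_simps [simp]:
  "word_prod g [] = 1"
  "word_prod g (i # w) = g i * word_prod g w"
  "word_prod g (u @ v) = word_prod g u * word_prod g v"
  by (simp_all add: word_prod_def)

lemma word_prod_rev_mult:
  "\<forall>i\<in>set w. g' i * g i = 1 \<Longrightarrow> word_prod g' (rev w) * word_prod g w = 1"
proof (induction w)
  case (Cons i w)
  have "word_prod g' (rev (i # w)) * word_prod g (i # w)
      = word_prod g' (rev w) * (g' i * g i) * word_prod g w"
    by (simp add: mult.assoc)
  then show ?case
    using Cons by simp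
qed simp

definition braid_relations :: "nat \<Rightarrow> (nat \<Rightarrow> 'a::monoid_mult) \<Rightarrow> bool" where
  "braid_relations n g \<longleftrightarrow>
     (\<forall>i j. 1 \<le> i \<and> i + 1 < j \<and> j < n \<longrightarrow> g i * g j = g j * g i) \<and>
     (\<forall>i. 1 \<le> i \<and> i + 1 < n \<longrightarrow> g i * g (i + 1) * g i = g (i + 1) * g i * g (i + 1))"

lemma braid_relations_inverse:
  assumes rel: "braid_relations n g"
    and inverse: "\<forall>i. 1 \<le> i \<and> i < n \<longrightarrow> g i * g' i = 1 \<and> g' i * g i = 1"
  shows "braid_relations n g'"
proof -
  have inverse_eq: "x' = y'" if "x' * x = 1" "y * y' = 1" "x = y" for x x' y y' :: 'a
  proof -
    have "x' = x' * (y * y')"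
      using that(2) by simp
    also have "\<dots> = y'"
      using that(1,3) by (simp add: mult.assoc[symmetric])
    finally show ?thesis .
  qed
  have cancel: "g' i * (g i * x) = x" "g i * (g' i * x) = x" if "1 \<le> i" "i < n" for i x
    using inverse that by (simp_all add: mult.assoc[symmetric])
  have "g' i * g' j = g' j * g' i" if "1 \<le> i" "i + 1 < j" "j < n" for i j
  proof (rule inverse_eq)
    show "g' i * g' j * (g j * g i) = 1" "g i * g j * (g' j * g' i) = 1"
      using that cancel[of i] cancel[of j] inverse by (simp_all add: mult.assoc)
    show "g j * g i = g i * g j"
      using that rel unfolding braid_relations_def by (metis (no_types, lifting))
  qed
  moreover have "g' i * g' (i + 1) * g' i = g' (i + 1) * g' i * g' (i + 1)"
    if "1 \<le> i" "i + 1 < n" for i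
  proof (rule inverse_eq)
    show "g' i * g' (i + 1) * g' i * (g i * g (i + 1) * g i) = 1"
      "g (i + 1) * g i * g (i + 1) * (g' (i + 1) * g' i * g' (i + 1)) = 1"
      using that cancel[of i] cancel[of "i + 1"] inverse by (simp_all add: mult.assoc)
    show "g i * g (i + 1) * g i = g (i + 1) * g i * g (i + 1)"
      using rel that by (simp add: braid_relations_def)
  qed
  ultimately show ?thesis
    unfolding braid_relations_def by blast
qed

lemma word_prod_exchange:
  assumes rel: "braid_relations n g"
    and tails: "\<And>i w u' v'. reduced_word n p (i # w) \<Longrightarrow> reduced_word n (p \<circ> sswap i) u'
      \<Longrightarrow> reduced_word n (p \<circ> sswap i) v' \<Longrightarrow> word_prod g u' = word_prod g v'"
    and ri: "reduced_word n p (i # u)" and rj: "reduced_word n p (j # v)" and "i < j"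
  shows "word_prod g (i # u) = word_prod g (j # v)"
proof (cases "i + 1 < j")
  case True
  obtain r where r: "reduced_word n (p \<circ> sswap i) (j # r)" "reduced_word n (p \<circ> sswap j) (i # r)"
    using reduced_words_commute_witness[OF ri rj True] .
  have "g i * g j = g j * g i"
    using rel True ri rj by (auto simp: braid_relations_def reduced_word_def)
  then show ?thesis
    using tails[OF ri reduced_word_ConsD(2)[OF ri] r(1)] tails[OF rj reduced_word_ConsD(2)[OF rj] r(2)]
    by (simp add: mult.assoc[symmetric])
next
  case False
  with \<open>i < j\<close> have j: "j = i + 1"
    by simp
  obtain r where r: "reduced_word n (p \<circ> sswap i) ((i + 1) # i # r)"
    "reduced_word n (p \<circ> sswap (i + 1)) (i # (i + 1) # r)"
    using reduced_words_braid_witness[OF ri rj[unfolded j]] .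
  have "g i * g (i + 1) * g i = g (i + 1) * g i * g (i + 1)"
    using rel ri rj j by (auto simp: braid_relations_def reduced_word_def)
  then show ?thesis
    using tails[OF ri reduced_word_ConsD(2)[OF ri] r(1)]
      tails[OF rj[unfolded j] reduced_word_ConsD(2)[OF rj[unfolded j]] r(2)] j
    by (simp add: mult.assoc[symmetric])
qed

lemma matsumoto_word_prod_eq:
  assumes rel: "braid_relations n g"
  shows "reduced_word n p u \<Longrightarrow> reduced_word n p v \<Longrightarrow> word_prod g u = word_prod g v"
proof (induction "inv_len n p" arbitrary: p u v rule: less_induct)
  case less
  have tails: "word_prod g u' = word_prod g v'"
    if "reduced_word n p (i # w)" "reduced_word n (p \<circ> sswap i) u'" "reduced_word n (p \<circ> sswap i) v'"
    for i w u' v'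
  proof -
    have "1 \<le> i" "i < n"
      using that(1) by (auto simp: reduced_word_def)
    then have "inv_len n (p \<circ> sswap i) < inv_len n p"
      using inv_len_comp_sswap_descent reduced_word_ConsD(1)[OF that(1)] by fastforce
    then show ?thesis
      using less.hyps that(2,3) by blast
  qed
  show ?case
  proof (cases u)
    case Nil
    then show ?thesis
      using less.prems by (simp add: reduced_word_def)
  next
    case (Cons i u')
    then obtain j v' where v: "v = j # v'"
      using less.prems by (cases v) (auto simp: reduced_word_def)
    have ru: "reduced_word n p (i # u')" and rv: "reduced_word n p (j # v')"
      using less.prems Cons v by simp_all
    consider "i = j" | "i < j" | "j < i"
      by linarith
    then show ?thesis
    proof cases
      case 1
      then have "word_prod g u' = word_prod g v'"
        using tails[OF ru reduced_word_ConsD(2)[OF ru]] reduced_word_ConsD(2)[OF rv] by simp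
      then show ?thesis
        using 1 Cons v by simp
    next
      case 2
      then show ?thesis
        using word_prod_exchange[OF rel tails ru rv] Cons v by simp
    next
      case 3
      then show ?thesis
        using word_prod_exchange[OF rel tails rv ru] Cons v by simp
    qed
  qed
qed

lemma pbraid_eq_word_prod:
  assumes "braid_relations n g" "reduced_word n p w"
  shows "pbraid g n p = word_prod g w"
  using matsumoto_word_prod_eq[OF assms(1) reduced_word_rword[OF reduced_word_permutes] assms(2)] assms(2)
  by (simp add: pbraid_def word_prod_def)

lemma pbraid_id [simp]: "pbraid g n id = 1"
  using reduced_word_rword[of id n] by (simp add: permutes_id pbraid_def reduced_word_def)

lemma pbraid_comp_sswap:
  assumes rel: "braid_relations n g" and p: "p permutes {1..n}"
    and "1 \<le> i" "i < n" "p i < p (i + 1)"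
  shows "pbraid g n (p \<circ> sswap i) = g i * pbraid g n p"
proof -
  have r: "reduced_word n p (rword n p)"
    using reduced_word_rword[OF p] .
  have "reduced_word n (p \<circ> sswap i) (i # rword n p)"
    by (rule reduced_word_ConsI) (use assms r in \<open>auto simp: sswap_def comp_assoc\<close>)
  then show ?thesis
    using pbraid_eq_word_prod[OF rel] r by simp
qed

lemma pbraid_sswap_comp:
  assumes rel: "braid_relations n g" and p: "p permutes {1..n}"
    and "1 \<le> i" "i < n" "inv p i < inv p (i + 1)"
  shows "pbraid g n (sswap i \<circ> p) = pbraid g n p * g i"
  using pbraid_eq_word_prod[OF rel] reduced_word_snocI[OF assms(2-5) reduced_word_rword[OF p]]
    reduced_word_rword[OF p] by simp

lemma sigma_pbraid_eq_pbraid_sigma: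
  assumes rel: "braid_relations n g" and y: "y permutes {1..n}"
    and "1 \<le> a" "a < n" "1 \<le> b" "b < n" "y a = b" "y (a + 1) = b + 1"
  shows "g a * pbraid g n y = pbraid g n y * g b"
proof -
  have "inv y b = a" "inv y (b + 1) = a + 1"
    using assms(7,8) permutes_inv_eq[OF y] by auto
  then have "pbraid g n (sswap b \<circ> y) = pbraid g n y * g b"
    using pbraid_sswap_comp[OF rel y] assms(5,6) by simp
  moreover have "pbraid g n (y \<circ> sswap a) = g a * pbraid g n y"
    using pbraid_comp_sswap[OF rel y] assms(3,4,7,8) by simp
  ultimately show ?thesis
    using comp_sswap_eq_sswap_comp[OF permutes_bij[OF y] assms(7,8)] by simp
qed

lemma pbraid_inv_mult_pbraid:
  assumes "braid_relations n g" "braid_relations n g'"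
    and "\<forall>i. 1 \<le> i \<and> i < n \<longrightarrow> g' i * g i = 1" and p: "p permutes {1..n}"
  shows "pbraid g' n (inv p) * pbraid g n p = 1"
proof -
  have r: "reduced_word n p (rword n p)"
    using reduced_word_rword[OF p] .
  have "pbraid g' n (inv p) = word_prod g' (rev (rword n p))"
    using pbraid_eq_word_prod[OF assms(2) reduced_word_rev[OF r]] .
  moreover have "pbraid g n p = word_prod g (rword n p)"
    using pbraid_eq_word_prod[OF assms(1) r] .
  moreover have "\<forall>i\<in>set (rword n p). g' i * g i = 1"
    using r assms(3) by (simp add: reduced_word_def)
  ultimately show ?thesis
    using word_prod_rev_mult by simp
qed

section \<open>The Hecke algebra\<close>

locale hecke =
  fixes \<sigma> \<sigma>' :: "nat \<Rightarrow> 'a::ring_1" and q qi :: 'a and n :: nat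
  assumes q_qi: "q * qi = 1" and qi_q: "qi * q = 1" and q_central: "\<forall>y. q * y = y * q"
    and sigma_inverse: "\<forall>i. 1 \<le> i \<and> i < n \<longrightarrow> \<sigma> i * \<sigma>' i = 1 \<and> \<sigma>' i * \<sigma> i = 1"
    and quadratic: "\<forall>i. 1 \<le> i \<and> i < n \<longrightarrow> (\<sigma> i - q) * (\<sigma> i + qi) = 0"
    and braid: "braid_relations n \<sigma>"
begin

abbreviation T :: "(nat \<Rightarrow> nat) \<Rightarrow> 'a" where
  "T p \<equiv> pbraid \<sigma> n p"

lemma q_commute: "q * y = y * q"
  using q_central by blast

lemma qi_commute: "qi * y = y * qi"
proof -
  have "qi * y = qi * (y * q) * qi"
    using q_qi by (simp add: mult.assoc)
  also have "\<dots> = y * qi"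
    using qi_q by (simp add: q_commute[symmetric] mult.assoc[symmetric])
  finally show ?thesis .
qed

lemma q_qi_cancel: "q * (qi * x) = x"
  using q_qi by (simp flip: mult.assoc)

lemma qi_q_cancel: "qi * (q * x) = x"
  using qi_q by (simp flip: mult.assoc)

lemma sigma_sq: "1 \<le> i \<Longrightarrow> i < n \<Longrightarrow> \<sigma> i * \<sigma> i = (q - qi) * \<sigma> i + 1"
  using quadratic q_qi qi_commute[of "\<sigma> i"] by (auto simp: algebra_simps)

lemma sigma'_eq: "1 \<le> i \<Longrightarrow> i < n \<Longrightarrow> \<sigma>' i = \<sigma> i - (q - qi)"
proof -
  assume i: "1 \<le> i" "i < n"
  have "\<sigma> i * (\<sigma> i - (q - qi)) = 1"
    using sigma_sq[OF i] q_commute qi_commute by (simp add: algebra_simps)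
  then have "\<sigma>' i * (\<sigma> i * (\<sigma> i - (q - qi))) = \<sigma>' i"
    by simp
  then show ?thesis
    using sigma_inverse i by (simp add: mult.assoc[symmetric])
qed

lemma braid_relations_sigma': "braid_relations n \<sigma>'"
  using braid_relations_inverse[OF braid sigma_inverse] .

lemma sigma_mult_T_descent:
  assumes p: "p permutes {1..n}" and i: "1 \<le> i" "i < n" and "p (i + 1) < p i"
  shows "\<sigma> i * T p = (q - qi) * T p + T (p \<circ> sswap i)"
proof -
  let ?p = "p \<circ> sswap i"
  have "?p i < ?p (i + 1)"
    using assms(4) by (simp add: sswap_def)
  then have T_p: "T p = \<sigma> i * T ?p"
    using pbraid_comp_sswap[OF braid permutes_comp_sswap[OF p i] i] by (simp add: comp_assoc)
  have "\<sigma> i * T p = (\<sigma> i * \<sigma> i) * T ?p"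
    by (simp add: T_p mult.assoc)
  also have "\<dots> = (q - qi) * (\<sigma> i * T ?p) + T ?p"
    by (simp add: sigma_sq[OF i] distrib_right mult.assoc)
  finally show ?thesis
    by (simp add: T_p)
qed

inductive span_len :: "nat \<Rightarrow> 'a \<Rightarrow> bool" for m where
  basis: "p permutes {1..n} \<Longrightarrow> inv_len n p \<le> m \<Longrightarrow> span_len m (T p)"
| zero: "span_len m 0"
| add: "span_len m a \<Longrightarrow> span_len m b \<Longrightarrow> span_len m (a + b)"
| uminus: "span_len m a \<Longrightarrow> span_len m (- a)"
| mult_q: "span_len m a \<Longrightarrow> span_len m (q * a)"
| mult_qi: "span_len m a \<Longrightarrow> span_len m (qi * a)"

lemma span_len_mono: "span_len m a \<Longrightarrow> m \<le> m' \<Longrightarrow> span_len m' a"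
  by (induction rule: span_len.induct) (auto intro: span_len.intros)

lemma span_len_diff: "span_len m a \<Longrightarrow> span_len m b \<Longrightarrow> span_len m (a - b)"
  using span_len.add[OF _ span_len.uminus] by fastforce

lemma span_len_mult_q_minus_qi: "span_len m a \<Longrightarrow> span_len m ((q - qi) * a)"
  using span_len_diff[OF span_len.mult_q span_len.mult_qi] by (simp add: left_diff_distrib)

lemma span_len_sigma_mult:
  "span_len m a \<Longrightarrow> 1 \<le> i \<Longrightarrow> i < n \<Longrightarrow> span_len (Suc m) (\<sigma> i * a)"
proof (induction rule: span_len.induct)
  case (basis p)
  show ?case
  proof (cases "p i < p (i + 1)")
    case True
    then show ?thesis
      using pbraid_comp_sswap[OF braid basis(1,3,4) True] basis
        inv_len_comp_sswap_ascent[OF basis(3,4) True]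
      by (metis Suc_le_mono span_len.basis permutes_comp_sswap)
  next
    case False
    then have desc: "p (i + 1) < p i"
      using permutes_apply_Suc_neq[OF basis(1)] by (meson linorder_neqE_nat)
    have "span_len (Suc m) (T (p \<circ> sswap i))"
      using inv_len_comp_sswap_descent[OF basis(3,4) desc] basis
      by (intro span_len.basis permutes_comp_sswap) auto
    moreover have "span_len (Suc m) ((q - qi) * T p)"
      using basis by (intro span_len_mult_q_minus_qi span_len.basis) auto
    ultimately show ?thesis
      using sigma_mult_T_descent[OF basis(1,3,4) desc] by (simp add: span_len.add)
  qed
next
  case (mult_q a)
  then show ?case
    using span_len.mult_q by (metis mult.assoc q_commute)
next
  case (mult_qi a)
  then show ?case
    using span_len.mult_qi by (metis mult.assoc qi_commute)
qed (auto simp: distrib_left intro: span_len.intros)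

lemma span_len_word_prod_inverse:
  "\<forall>i\<in>set w. 1 \<le> i \<and> i < n \<Longrightarrow> span_len (length w) (word_prod \<sigma>' w)"
proof (induction w)
  case Nil
  then show ?case
    using span_len.basis[of id 0] by (simp add: permutes_id)
next
  case (Cons i w)
  have i: "1 \<le> i" "i < n" and IH: "span_len (length w) (word_prod \<sigma>' w)"
    using Cons by auto
  have "word_prod \<sigma>' (i # w) = \<sigma> i * word_prod \<sigma>' w - (q - qi) * word_prod \<sigma>' w"
    by (simp add: sigma'_eq[OF i] left_diff_distrib)
  then show ?case
    using span_len_sigma_mult[OF IH i] span_len_mono[OF span_len_mult_q_minus_qi[OF IH]]
    by (auto intro: span_len_diff)
qed

lemma span_len_word_prod_inverse_diff:
  "\<forall>i\<in>set w. 1 \<le> i \<and> i < n \<Longrightarrow> w \<noteq> [] \<Longrightarrow>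
     span_len (length w - 1) (word_prod \<sigma>' w - word_prod \<sigma> w)"
proof (induction w)
  case (Cons i w)
  have i: "1 \<le> i" "i < n"
    using Cons.prems by auto
  have "word_prod \<sigma>' (i # w) - word_prod \<sigma> (i # w)
      = \<sigma> i * (word_prod \<sigma>' w - word_prod \<sigma> w) - (q - qi) * word_prod \<sigma>' w"
    by (simp add: sigma'_eq[OF i] algebra_simps)
  moreover have "span_len (length w) ((q - qi) * word_prod \<sigma>' w)"
    using span_len_word_prod_inverse Cons.prems by (auto intro: span_len_mult_q_minus_qi)
  moreover have "span_len (length w) (\<sigma> i * (word_prod \<sigma>' w - word_prod \<sigma> w))"
  proof (cases "w = []")
    case False
    then show ?thesis
      using span_len_sigma_mult[OF _ i] Cons by fastforce
  qed (simp add: span_len.zero)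
  ultimately show ?case
    by (auto intro: span_len_diff)
qed simp

lemma sandwich_span_len_eq_0:
  assumes "\<And>p. p permutes {1..n} \<Longrightarrow> inv_len n p \<le> m \<Longrightarrow> X * T p * Y = 0"
  shows "span_len m a \<Longrightarrow> X * a * Y = 0"
proof (induction rule: span_len.induct)
  case (mult_q a)
  have "X * (q * a) * Y = q * (X * a * Y)"
    by (metis mult.assoc q_commute)
  then show ?case
    using mult_q by simp
next
  case (mult_qi a)
  have "X * (qi * a) * Y = qi * (X * a * Y)"
    by (metis mult.assoc qi_commute)
  then show ?case
    using mult_qi by simp
qed (use assms in \<open>auto simp: distrib_left distrib_right\<close>)

end

lemma shift_perm_eq_map_permutation:
  assumes "p permutes {1..k}"
  shows "shift_perm m k p = map_permutation {1..k} (\<lambda>i. i + m) p"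
proof
  fix y
  show "shift_perm m k p y = map_permutation {1..k} (\<lambda>i. i + m) p y"
  proof (cases "m < y \<and> y \<le> m + k")
    case True
    then have "map_permutation {1..k} (\<lambda>i. i + m) p ((y - m) + m) = p (y - m) + m"
      by (intro map_permutation_apply) (auto simp: inj_on_def)
    then show ?thesis
      using True by (simp add: shift_perm_def)
  next
    case False
    then have "y \<notin> (\<lambda>i. i + m) ` {1..k}"
      by auto
    then have "map_permutation {1..k} (\<lambda>i. i + m) p y = y"
      by (simp add: map_permutation_def)
    moreover have "shift_perm m k p y = y"
      using False unfolding shift_perm_def by argo
    ultimately show ?thesis
      by simp
  qed
qed

lemma permutes_shift_perm:
  assumes p: "p permutes {1..k}" and "m + k \<le> n"
  shows "shift_perm m k p permutes {1..n}"
proof -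
  have "bij_betw (\<lambda>i. i + m) {1..k} {1 + m..k + m}"
    by (simp add: bij_betw_def inj_on_def)
  then have "shift_perm m k p permutes {1 + m..k + m}"
    unfolding shift_perm_eq_map_permutation[OF p] using p by (rule map_permutation_permutes)
  then show ?thesis
    by (rule permutes_subset) (use assms(2) in auto)
qed

lemma shift_perm_comp:
  "p permutes {1..k} \<Longrightarrow> r permutes {1..k} \<Longrightarrow>
     shift_perm m k (p \<circ> r) = shift_perm m k p \<circ> shift_perm m k r"
  by (simp add: shift_perm_eq_map_permutation permutes_compose map_permutation_compose')

lemma shift_perm_sswap: "1 \<le> b \<Longrightarrow> b < k \<Longrightarrow> shift_perm m k (sswap b) = sswap (m + b)"
  by (auto simp: fun_eq_iff shift_perm_def sswap_def)

lemma inv_shift_perm: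
  assumes p: "p permutes {1..k}"
  shows "inv (shift_perm m k p) = shift_perm m k (inv p)"
proof (rule inv_unique_comp)
  have "shift_perm m k id = id"
    by (auto simp: fun_eq_iff shift_perm_def)
  then show "shift_perm m k p \<circ> shift_perm m k (inv p) = id"
    "shift_perm m k (inv p) \<circ> shift_perm m k p = id"
    using shift_perm_comp[OF p permutes_inv[OF p]] shift_perm_comp[OF permutes_inv[OF p] p]
      permutes_inv_o[OF p] by simp_all
qed

lemma sum_by_involution_pairs:
  assumes fin: "finite P" and closed: "\<And>p. p \<in> P \<Longrightarrow> f p \<in> P"
    and involution: "\<And>p. p \<in> P \<Longrightarrow> f (f p) = p"
    and A: "A \<subseteq> P" and swap: "\<And>p. p \<in> P \<Longrightarrow> p \<in> A \<longleftrightarrow> f p \<notin> A"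
  shows "sum g P = (\<Sum>p\<in>A. g p + g (f p))"
proof -
  have P: "P = A \<union> f ` A"
  proof
    show "P \<subseteq> A \<union> f ` A"
    proof
      fix p assume p: "p \<in> P"
      show "p \<in> A \<union> f ` A"
      proof (cases "p \<in> A")
        case False
        then have "f (f p) \<in> f ` A"
          using swap[OF p] by blast
        then show ?thesis
          using involution[OF p] by simp
      qed simp
    qed
  qed (use A closed in auto)
  have "inj_on f A"
    using A involution by (intro inj_onI) (metis subsetD)
  moreover have "A \<inter> f ` A = {}"
    using swap A by auto
  moreover have "finite A"
    using A fin finite_subset by blast
  ultimately have "sum g P = sum g A + sum g (f ` A)"
    unfolding P by (intro sum.union_disjoint) auto
  also have "sum g (f ` A) = sum (g \<circ> f) A"
    by (rule sum.reindex) fact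
  finally show ?thesis
    by (simp add: sum.distrib)
qed

definition block_adjacent :: "nat list \<Rightarrow> nat \<Rightarrow> bool" where
  "block_adjacent ks j \<longleftrightarrow>
     (\<exists>c < length ks. sum_list (take c ks) + 1 \<le> j \<and> j < sum_list (take c ks) + ks ! c)"

lemma sum_list_take_nth_le:
  assumes "c < length ks"
  shows "sum_list (take c ks) + ks ! c \<le> sum_list (ks :: nat list)"
proof -
  have "sum_list (take c ks) + ks ! c = sum_list (take (Suc c) ks)"
    using take_Suc_conv_app_nth[OF assms] by simp
  also have "\<dots> \<le> sum_list (take (Suc c) ks) + sum_list (drop (Suc c) ks)"
    by simp
  finally show ?thesis
    by (simp flip: sum_list_append)
qed

lemma block_adjacent_range: "sum_list ks \<le> n \<Longrightarrow> block_adjacent ks j \<Longrightarrow> 1 \<le> j \<and> j < n"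
  unfolding block_adjacent_def using sum_list_take_nth_le by fastforce

lemma commute_mult_left:
  fixes x c t :: "'a::monoid_mult"
  assumes "x * c = c * x" "x * t = t * x"
  shows "x * (c * t) = c * t * x"
proof -
  have "x * (c * t) = c * (x * t)"
    using assms(1) by (simp flip: mult.assoc)
  then show ?thesis
    using assms(2) by (simp add: mult.assoc)
qed

lemma blocks_commute:
  assumes "\<forall>m k. m0 \<le> m \<longrightarrow> m + k \<le> n \<longrightarrow> g * f m k = f m k * g"
  shows "m0 + sum_list ks \<le> n \<Longrightarrow> g * blocks f m0 ks = blocks f m0 ks * g"
  using assms
proof (induction ks arbitrary: m0)
  case (Cons k ks)
  have "g * f m0 k = f m0 k * g" "g * blocks f (m0 + k) ks = blocks f (m0 + k) ks * g"
    using Cons by auto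
  then show ?case
    using commute_mult_left[of g "f m0 k" "blocks f (m0 + k) ks"] by simp
qed simp

lemma blocks_left_factor:
  assumes factor: "\<forall>m k. m + k \<le> n \<and> m + 1 \<le> j \<and> j < m + k \<longrightarrow> (\<exists>X. f m k = L * X)"
    and commute: "\<forall>m k. m + k \<le> n \<and> m + k < j \<longrightarrow> L * f m k = f m k * L"
  shows "c < length ks \<Longrightarrow> m0 + sum_list ks \<le> n \<Longrightarrow> m0 + sum_list (take c ks) + 1 \<le> j
    \<Longrightarrow> j < m0 + sum_list (take c ks) + ks ! c \<Longrightarrow> \<exists>X. blocks f m0 ks = L * X"
proof (induction ks arbitrary: m0 c)
  case (Cons k ks)
  show ?case
  proof (cases c)
    case 0
    then obtain X where "f m0 k = L * X"
      using factor Cons.prems by fastforce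
    then show ?thesis
      by (auto simp: mult.assoc)
  next
    case (Suc c')
    obtain X where X: "blocks f (m0 + k) ks = L * X"
      using Cons.IH[of c' "m0 + k"] Cons.prems Suc by (auto simp: add.assoc)
    have "L * f m0 k = f m0 k * L"
      using commute Cons.prems Suc by auto
    then have "blocks f m0 (k # ks) = L * (f m0 k * X)"
      using X by (simp add: mult.assoc[symmetric])
    then show ?thesis ..
  qed
qed simp

lemma blocks_right_factor:
  assumes factor: "\<forall>m k. m + k \<le> n \<and> m + 1 \<le> j \<and> j < m + k \<longrightarrow> (\<exists>X. f m k = X * R)"
    and commute: "\<forall>m k. m + k \<le> n \<and> j + 1 \<le> m \<longrightarrow> R * f m k = f m k * R"
  shows "c < length ks \<Longrightarrow> m0 + sum_list ks \<le> n \<Longrightarrow> m0 + sum_list (take c ks) + 1 \<le> j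
    \<Longrightarrow> j < m0 + sum_list (take c ks) + ks ! c \<Longrightarrow> \<exists>X. blocks f m0 ks = X * R"
proof (induction ks arbitrary: m0 c)
  case (Cons k ks)
  show ?case
  proof (cases c)
    case 0
    then obtain X where X: "f m0 k = X * R"
      using factor Cons.prems by fastforce
    have "R * blocks f (m0 + k) ks = blocks f (m0 + k) ks * R"
      using blocks_commute[of "m0 + k" n R f ks] commute Cons.prems 0 by auto
    then have "blocks f m0 (k # ks) = X * blocks f (m0 + k) ks * R"
      using X by (simp add: mult.assoc)
    then show ?thesis ..
  next
    case (Suc c')
    obtain X where "blocks f (m0 + k) ks = X * R"
      using Cons.IH[of c' "m0 + k"] Cons.prems Suc by (auto simp: add.assoc)
    then have "blocks f m0 (k # ks) = (f m0 k * X) * R"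
      by (simp add: mult.assoc)
    then show ?thesis ..
  qed
qed simp

context hecke
begin

lemma sigma_commute_T_shift_perm:
  assumes p: "p permutes {1..k}" and "m + k \<le> n" and j: "1 \<le> j" "j < n"
    and outside: "j + 1 \<le> m \<or> m + k < j"
  shows "\<sigma> j * T (shift_perm m k p) = T (shift_perm m k p) * \<sigma> j"
  using outside by (intro sigma_pbraid_eq_pbraid_sigma[OF braid permutes_shift_perm[OF assms(1,2)] j j])
    (auto simp: shift_perm_def)

lemma sigma_commute_a_block:
  assumes "m + k \<le> n" "1 \<le> j" "j < n" "j + 1 \<le> m \<or> m + k < j"
  shows "\<sigma> j * a_block \<sigma> q n m k = a_block \<sigma> q n m k * \<sigma> j"
  unfolding a_block_def sum_distrib_left sum_distrib_right
proof (rule sum.cong[OF refl])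
  fix p assume "p \<in> {p. p permutes {1..k}}"
  then show "\<sigma> j * (q ^ inv_len k p * T (shift_perm m k p))
      = q ^ inv_len k p * T (shift_perm m k p) * \<sigma> j"
    using sigma_commute_T_shift_perm[OF _ assms] power_commuting_commutes[OF q_commute]
    by (intro commute_mult_left) simp_all
qed

lemma sigma_commute_b_block:
  assumes "m + k \<le> n" "1 \<le> j" "j < n" "j + 1 \<le> m \<or> m + k < j"
  shows "\<sigma> j * b_block \<sigma> qi n m k = b_block \<sigma> qi n m k * \<sigma> j"
  unfolding b_block_def sum_distrib_left sum_distrib_right
proof (rule sum.cong[OF refl])
  fix p assume "p \<in> {p. p permutes {1..k}}"
  moreover have "(- qi) ^ l * y = y * (- qi) ^ l" for l y
    by (rule power_commuting_commutes) (simp add: qi_commute)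
  ultimately show "\<sigma> j * ((- qi) ^ inv_len k p * T (shift_perm m k p))
      = (- qi) ^ inv_len k p * T (shift_perm m k p) * \<sigma> j"
    using sigma_commute_T_shift_perm[OF _ assms] by (intro commute_mult_left) simp_all
qed

end

lemma commute_affine:
  fixes x c s :: "'a::ring_1"
  assumes "s * x = x * s" "c * x = x * c"
  shows "(1 + c * s) * x = x * (1 + c * s)" "(1 - c * s) * x = x * (1 - c * s)"
proof -
  have "c * s * x = c * x * s"
    using assms(1) by (simp add: mult.assoc)
  also have "\<dots> = x * (c * s)"
    using assms(2) by (simp add: mult.assoc)
  finally have "c * s * x = x * (c * s)" .
  then show "(1 + c * s) * x = x * (1 + c * s)" "(1 - c * s) * x = x * (1 - c * s)"
    by (simp_all add: algebra_simps)
qed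

context hecke
begin

lemma a_block_left_factor:
  assumes b: "1 \<le> b" "b < k" and mk: "m + k \<le> n"
  shows "\<exists>X. a_block \<sigma> q n m k = (1 + q * \<sigma> (m + b)) * X"
proof -
  let ?P = "{p. p permutes {1..k}}"
  let ?A = "{p \<in> ?P. p b < p (b + 1)}"
  let ?t = "\<lambda>p. q ^ inv_len k p * T (shift_perm m k p)"
  have "a_block \<sigma> q n m k = (\<Sum>p\<in>?A. ?t p + ?t (p \<circ> sswap b))"
    unfolding a_block_def
  proof (rule sum_by_involution_pairs)
    show "p \<in> ?A \<longleftrightarrow> p \<circ> sswap b \<notin> ?A" if "p \<in> ?P" for p
      using that permutes_apply_Suc_neq[of p "{1..k}" b] permutes_comp_sswap[OF _ b]
      by (auto simp: sswap_def)
    show "p \<circ> sswap b \<in> ?P" if "p \<in> ?P" for p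
      using permutes_comp_sswap[OF _ b] that by simp
  qed (auto simp: comp_assoc finite_permutations)
  also have "\<dots> = (\<Sum>p\<in>?A. (1 + q * \<sigma> (m + b)) * ?t p)"
  proof (rule sum.cong[OF refl])
    fix p assume "p \<in> ?A"
    then have p: "p permutes {1..k}" and asc: "p b < p (b + 1)"
      by auto
    have "shift_perm m k (p \<circ> sswap b) = shift_perm m k p \<circ> sswap (m + b)"
      using shift_perm_comp[OF p permutes_sswap[OF b]] shift_perm_sswap[OF b] by simp
    moreover have "shift_perm m k p (m + b) < shift_perm m k p (m + b + 1)"
      using asc b by (simp add: shift_perm_def)
    ultimately have "T (shift_perm m k (p \<circ> sswap b)) = \<sigma> (m + b) * T (shift_perm m k p)"
      using pbraid_comp_sswap[OF braid permutes_shift_perm[OF p mk]] b mk by simp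
    moreover have "inv_len k (p \<circ> sswap b) = Suc (inv_len k p)"
      using inv_len_comp_sswap_ascent[OF b asc] .
    moreover have "\<sigma> (m + b) * ?t p = q ^ inv_len k p * (\<sigma> (m + b) * T (shift_perm m k p))"
      using power_commuting_commutes[OF q_commute, of "inv_len k p" "\<sigma> (m + b)"]
      by (simp flip: mult.assoc)
    ultimately show "?t p + ?t (p \<circ> sswap b) = (1 + q * \<sigma> (m + b)) * ?t p"
      by (simp add: distrib_right mult.assoc)
  qed
  also have "\<dots> = (1 + q * \<sigma> (m + b)) * (\<Sum>p\<in>?A. ?t p)"
    by (simp add: sum_distrib_left)
  finally show ?thesis ..
qed

lemma b_block_right_factor:
  assumes b: "1 \<le> b" "b < k" and mk: "m + k \<le> n"
  shows "\<exists>X. b_block \<sigma> qi n m k = X * (1 - qi * \<sigma> (m + b))"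
proof -
  let ?P = "{p. p permutes {1..k}}"
  let ?A = "{p \<in> ?P. inv p b < inv p (b + 1)}"
  let ?t = "\<lambda>p. (- qi) ^ inv_len k p * T (shift_perm m k p)"
  have inv_comp: "inv (sswap b \<circ> p) = inv p \<circ> sswap b" if "p \<in> ?P" for p
    using that by (simp add: inv_sswap_comp permutes_bij)
  have "b_block \<sigma> qi n m k = (\<Sum>p\<in>?A. ?t p + ?t (sswap b \<circ> p))"
    unfolding b_block_def
  proof (rule sum_by_involution_pairs)
    show "p \<in> ?A \<longleftrightarrow> sswap b \<circ> p \<notin> ?A" if "p \<in> ?P" for p
      using that inv_comp[OF that] permutes_apply_Suc_neq[OF permutes_inv, of p "{1..k}" b]
        permutes_sswap_comp[OF _ b] by (auto simp: sswap_def)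
    show "sswap b \<circ> p \<in> ?P" if "p \<in> ?P" for p
      using permutes_sswap_comp[OF _ b] that by simp
  qed (auto simp flip: comp_assoc simp: finite_permutations)
  also have "\<dots> = (\<Sum>p\<in>?A. ?t p * (1 - qi * \<sigma> (m + b)))"
  proof (rule sum.cong[OF refl])
    fix p assume "p \<in> ?A"
    then have p: "p permutes {1..k}" and asc: "inv p b < inv p (b + 1)"
      by auto
    have "shift_perm m k (sswap b \<circ> p) = sswap (m + b) \<circ> shift_perm m k p"
      using shift_perm_comp[OF permutes_sswap[OF b] p] shift_perm_sswap[OF b] by simp
    moreover have "inv (shift_perm m k p) (m + b) < inv (shift_perm m k p) (m + b + 1)"
      using asc b by (simp add: inv_shift_perm[OF p] shift_perm_def)
    ultimately have T: "T (shift_perm m k (sswap b \<circ> p)) = T (shift_perm m k p) * \<sigma> (m + b)"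
      using pbraid_sswap_comp[OF braid permutes_shift_perm[OF p mk]] b mk by simp
    have "?t (sswap b \<circ> p)
        = (- qi) ^ inv_len k p * (- qi * (T (shift_perm m k p) * \<sigma> (m + b)))"
      unfolding T inv_len_sswap_comp_ascent[OF p b asc] by (simp only: power_Suc2 mult.assoc)
    also have "\<dots> = ?t p * (- qi * \<sigma> (m + b))"
      by (simp add: qi_commute[of "T (shift_perm m k p)"] flip: mult.assoc)
    finally show "?t p + ?t (sswap b \<circ> p) = ?t p * (1 - qi * \<sigma> (m + b))"
      by (simp add: algebra_simps)
  qed
  also have "\<dots> = (\<Sum>p\<in>?A. ?t p) * (1 - qi * \<sigma> (m + b))"
    by (simp add: sum_distrib_right)
  finally show ?thesis ..
qed

lemma E_part_left_factor:
  assumes "sum_list lam \<le> n" and "block_adjacent lam j"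
  shows "\<exists>X. E_part \<sigma> q n lam = (1 + q * \<sigma> j) * X"
proof -
  obtain c where c: "c < length lam" "sum_list (take c lam) + 1 \<le> j"
    "j < sum_list (take c lam) + lam ! c"
    using assms(2) unfolding block_adjacent_def by blast
  have j: "1 \<le> j" "j < n"
    using block_adjacent_range[OF assms] by auto
  have "\<exists>X. a_block \<sigma> q n m k = (1 + q * \<sigma> j) * X"
    if "m + k \<le> n" "m + 1 \<le> j" "j < m + k" for m k
    using a_block_left_factor[of "j - m" k m] that by simp
  moreover have "(1 + q * \<sigma> j) * a_block \<sigma> q n m k = a_block \<sigma> q n m k * (1 + q * \<sigma> j)"
    if "m + k \<le> n" "m + k < j" for m k
    using sigma_commute_a_block[of m k j] that j q_commute by (intro commute_affine) auto
  ultimately show ?thesis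
    unfolding E_part_def using blocks_left_factor[of n j "a_block \<sigma> q n" "1 + q * \<sigma> j" c lam 0]
      assms(1) c by auto
qed

lemma F_part_right_factor:
  assumes "sum_list lam \<le> n" and "block_adjacent lam j"
  shows "\<exists>X. F_part \<sigma> qi n lam = X * (1 - qi * \<sigma> j)"
proof -
  obtain c where c: "c < length lam" "sum_list (take c lam) + 1 \<le> j"
    "j < sum_list (take c lam) + lam ! c"
    using assms(2) unfolding block_adjacent_def by blast
  have j: "1 \<le> j" "j < n"
    using block_adjacent_range[OF assms] by auto
  have "\<exists>X. b_block \<sigma> qi n m k = X * (1 - qi * \<sigma> j)"
    if "m + k \<le> n" "m + 1 \<le> j" "j < m + k" for m k
    using b_block_right_factor[of "j - m" k m] that by simp
  moreover have "(1 - qi * \<sigma> j) * b_block \<sigma> qi n m k = b_block \<sigma> qi n m k * (1 - qi * \<sigma> j)"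
    if "m + k \<le> n" "j + 1 \<le> m" for m k
    using sigma_commute_b_block[of m k j] that j qi_commute by (intro commute_affine) auto
  ultimately show ?thesis
    unfolding F_part_def using blocks_right_factor[of n j "b_block \<sigma> qi n" "1 - qi * \<sigma> j" c lam 0]
      assms(1) c by auto
qed

lemma sigma_mult_E_part:
  assumes "sum_list lam \<le> n" and "block_adjacent lam j"
  shows "\<sigma> j * E_part \<sigma> q n lam = q * E_part \<sigma> q n lam"
proof -
  obtain X where X: "E_part \<sigma> q n lam = (1 + q * \<sigma> j) * X"
    using E_part_left_factor[OF assms] by blast
  have j: "1 \<le> j" "j < n"
    using block_adjacent_range[OF assms] by auto
  have "\<sigma> j * (1 + q * \<sigma> j) = \<sigma> j + q * (\<sigma> j * \<sigma> j)"
    by (simp add: distrib_left q_commute[of "\<sigma> j", symmetric] flip: mult.assoc)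
  also have "\<dots> = q * (1 + q * \<sigma> j)"
    by (simp add: sigma_sq[OF j] algebra_simps q_qi_cancel)
  finally show ?thesis
    unfolding X by (simp flip: mult.assoc)
qed

lemma F_part_mult_sigma:
  assumes "sum_list lam \<le> n" and "block_adjacent lam j"
  shows "F_part \<sigma> qi n lam * \<sigma> j = - qi * F_part \<sigma> qi n lam"
proof -
  obtain X where X: "F_part \<sigma> qi n lam = X * (1 - qi * \<sigma> j)"
    using F_part_right_factor[OF assms] by blast
  have j: "1 \<le> j" "j < n"
    using block_adjacent_range[OF assms] by auto
  have "(1 - qi * \<sigma> j) * \<sigma> j = \<sigma> j - qi * (\<sigma> j * \<sigma> j)"
    by (simp add: left_diff_distrib mult.assoc)
  also have "\<dots> = - qi * (1 - qi * \<sigma> j)"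
    by (simp add: sigma_sq[OF j] algebra_simps qi_q_cancel)
  finally have "X * (1 - qi * \<sigma> j) * \<sigma> j = X * (- qi * (1 - qi * \<sigma> j))"
    by (simp add: mult.assoc)
  then show ?thesis
    unfolding X using qi_commute[of X] by (simp flip: mult.assoc)
qed

end

section \<open>Sandwiching between \<open>F\<close> and \<open>E\<close>\<close>

text \<open>The permutations \<open>y\<close> for which \<open>F T y E\<close> cannot be reduced by absorbing a generator
  into \<open>F\<close> or \<open>E\<close>, nor killed by the relation \<open>(1 - qi \<sigma>) (1 + q \<sigma>) = 0\<close>.\<close>
definition distinguished_perm :: "nat list \<Rightarrow> nat list \<Rightarrow> (nat \<Rightarrow> nat) \<Rightarrow> bool" where
  "distinguished_perm mu lam y \<longleftrightarrow>
     (\<forall>a. block_adjacent mu a \<longrightarrow> y a < y (a + 1)) \<and>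
     (\<forall>b. block_adjacent lam b \<longrightarrow> inv y b < inv y (b + 1)) \<and>
     (\<forall>a b. block_adjacent mu a \<longrightarrow> block_adjacent lam b \<longrightarrow> \<not> (y a = b \<and> y (a + 1) = b + 1))"

context hecke
begin

lemma F_T_E_descent_left:
  assumes mu: "sum_list mu \<le> n" and y: "y permutes {1..n}"
    and a: "block_adjacent mu a" "y (a + 1) < y a"
  shows "F_part \<sigma> qi n mu * T y * E = - qi * (F_part \<sigma> qi n mu * T (y \<circ> sswap a) * E)"
proof -
  have ar: "1 \<le> a" "a < n"
    using block_adjacent_range[OF mu a(1)] by auto
  have "(y \<circ> sswap a) a < (y \<circ> sswap a) (a + 1)"
    using a(2) by (simp add: sswap_def)
  then have "T y = \<sigma> a * T (y \<circ> sswap a)"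
    using pbraid_comp_sswap[OF braid permutes_comp_sswap[OF y ar] ar] by (simp add: comp_assoc)
  then have "F_part \<sigma> qi n mu * T y * E = F_part \<sigma> qi n mu * \<sigma> a * T (y \<circ> sswap a) * E"
    by (simp add: mult.assoc)
  then show ?thesis
    using F_part_mult_sigma[OF mu a(1)] by (simp add: mult.assoc)
qed

lemma F_T_E_descent_right:
  assumes lam: "sum_list lam \<le> n" and y: "y permutes {1..n}"
    and b: "block_adjacent lam b" "inv y (b + 1) < inv y b"
  shows "F * T y * E_part \<sigma> q n lam = q * (F * T (sswap b \<circ> y) * E_part \<sigma> q n lam)"
proof -
  have br: "1 \<le> b" "b < n"
    using block_adjacent_range[OF lam b(1)] by auto
  have "inv (sswap b \<circ> y) b < inv (sswap b \<circ> y) (b + 1)"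
    using b(2) by (simp add: inv_sswap_comp permutes_bij[OF y] sswap_def)
  then have "T y = T (sswap b \<circ> y) * \<sigma> b"
    using pbraid_sswap_comp[OF braid permutes_sswap_comp[OF y br] br]
    by (simp add: comp_assoc[symmetric])
  then show ?thesis
    using sigma_mult_E_part[OF lam b(1)] q_commute by (simp add: mult.assoc)
qed

lemma F_T_E_eq_0_if_adjacent:
  assumes lam: "sum_list lam \<le> n" and mu: "sum_list mu \<le> n" and y: "y permutes {1..n}"
    and ab: "block_adjacent mu a" "block_adjacent lam b" "y a = b" "y (a + 1) = b + 1"
  shows "F_part \<sigma> qi n mu * T y * E_part \<sigma> q n lam = 0"
proof -
  obtain X where X: "F_part \<sigma> qi n mu = X * (1 - qi * \<sigma> a)"
    using F_part_right_factor[OF mu ab(1)] by blast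
  obtain Y where Y: "E_part \<sigma> q n lam = (1 + q * \<sigma> b) * Y"
    using E_part_left_factor[OF lam ab(2)] by blast
  have a: "1 \<le> a" "a < n" and b: "1 \<le> b" "b < n"
    using block_adjacent_range mu lam ab by auto
  have "qi * \<sigma> a * T y = qi * (T y * \<sigma> b)"
    using sigma_pbraid_eq_pbraid_sigma[OF braid y a b ab(3,4)] by (simp add: mult.assoc)
  also have "\<dots> = T y * (qi * \<sigma> b)"
    using qi_commute[of "T y"] by (simp flip: mult.assoc)
  finally have "(1 - qi * \<sigma> a) * T y = T y * (1 - qi * \<sigma> b)"
    by (simp add: left_diff_distrib right_diff_distrib)
  moreover have "(1 - qi * \<sigma> b) * (1 + q * \<sigma> b) = 0"
  proof -
    have "\<sigma> b * (q * \<sigma> b) = q * (\<sigma> b * \<sigma> b)"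
      by (simp add: q_commute[of "\<sigma> b", symmetric] flip: mult.assoc)
    then have "qi * \<sigma> b * (q * \<sigma> b) = (q - qi) * \<sigma> b + 1"
      by (simp add: mult.assoc qi_q_cancel sigma_sq[OF b])
    moreover have "(1 - qi * \<sigma> b) * (1 + q * \<sigma> b)
        = 1 + q * \<sigma> b - qi * \<sigma> b - qi * \<sigma> b * (q * \<sigma> b)"
      by (simp add: algebra_simps)
    ultimately show ?thesis
      by (simp add: algebra_simps)
  qed
  ultimately have "(1 - qi * \<sigma> a) * T y * (1 + q * \<sigma> b) = 0"
    by (simp add: mult.assoc)
  then have "X * ((1 - qi * \<sigma> a) * T y * (1 + q * \<sigma> b)) * Y = 0"
    by simp
  then show ?thesis
    unfolding X Y by (simp add: mult.assoc)
qed

lemma F_T_E_eq_0_if_shorter: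
  assumes lam: "sum_list lam \<le> n" and mu: "sum_list mu \<le> n"
    and unique: "\<And>y. y permutes {1..n} \<Longrightarrow> distinguished_perm mu lam y \<Longrightarrow> y = w"
  shows "y permutes {1..n} \<Longrightarrow> inv_len n y < inv_len n w
    \<Longrightarrow> F_part \<sigma> qi n mu * T y * E_part \<sigma> q n lam = 0"
proof (induction "inv_len n y" arbitrary: y rule: less_induct)
  case less
  have y: "y permutes {1..n}"
    using less.prems by simp
  have "y a < y (a + 1) \<or> y (a + 1) < y a" "inv y b < inv y (b + 1) \<or> inv y (b + 1) < inv y b"
    for a b
    using permutes_apply_Suc_neq[OF y, of a] permutes_apply_Suc_neq[OF permutes_inv[OF y], of b]
    by linarith+
  then consider a where "block_adjacent mu a" "y (a + 1) < y a"
    | b where "block_adjacent lam b" "inv y (b + 1) < inv y b"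
    | "distinguished_perm mu lam y"
    | a b where "block_adjacent mu a" "block_adjacent lam b" "y a = b" "y (a + 1) = b + 1"
    unfolding distinguished_perm_def by blast
  then show ?case
  proof cases
    case (1 a)
    have "inv_len n (y \<circ> sswap a) < inv_len n y"
      using inv_len_comp_sswap_descent[of a n y] block_adjacent_range[OF mu 1(1)] 1(2) by simp
    then show ?thesis
      using F_T_E_descent_left[OF mu y 1] less permutes_comp_sswap[OF y]
        block_adjacent_range[OF mu 1(1)] by simp
  next
    case (2 b)
    have "inv_len n (sswap b \<circ> y) < inv_len n y"
      using inv_len_sswap_comp_descent[OF y, of b] block_adjacent_range[OF lam 2(1)] 2(2) by simp
    then show ?thesis
      using F_T_E_descent_right[OF lam y 2] less permutes_sswap_comp[OF y]
        block_adjacent_range[OF lam 2(1)] by simp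
  next
    case 3
    then show ?thesis
      using unique[OF y] less.prems by blast
  next
    case (4 a b)
    then show ?thesis
      using F_T_E_eq_0_if_adjacent[OF lam mu y] by blast
  qed
qed

lemma F_T_E_eq_F_T'_E:
  assumes lam: "sum_list lam \<le> n" and mu: "sum_list mu \<le> n" and w: "w permutes {1..n}"
    and unique: "\<And>y. y permutes {1..n} \<Longrightarrow> distinguished_perm mu lam y \<Longrightarrow> y = w"
  shows "F_part \<sigma> qi n mu * T w * E_part \<sigma> q n lam
    = F_part \<sigma> qi n mu * pbraid \<sigma>' n w * E_part \<sigma> q n lam"
proof -
  let ?u = "rword n w"
  have r: "reduced_word n w ?u"
    using reduced_word_rword[OF w] .
  have T: "T w = word_prod \<sigma> ?u" and T': "pbraid \<sigma>' n w = word_prod \<sigma>' ?u"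
    using pbraid_eq_word_prod[OF braid r] pbraid_eq_word_prod[OF braid_relations_sigma' r] by simp_all
  show ?thesis
  proof (cases "?u = []")
    case False
    have "span_len (length ?u - 1) (word_prod \<sigma>' ?u - word_prod \<sigma> ?u)"
      using span_len_word_prod_inverse_diff[of ?u] False r unfolding reduced_word_def by blast
    moreover have "F_part \<sigma> qi n mu * T y * E_part \<sigma> q n lam = 0"
      if "y permutes {1..n}" "inv_len n y \<le> length ?u - 1" for y
    proof -
      have "inv_len n w = length ?u"
        using r by (simp add: reduced_word_def)
      moreover have "length ?u \<noteq> 0"
        using False by simp
      ultimately have "inv_len n y < inv_len n w"
        using that(2) by linarith
      then show ?thesis
        using F_T_E_eq_0_if_shorter[OF lam mu unique that(1)] by simp
    qed
    ultimately have "F_part \<sigma> qi n mu * (word_prod \<sigma>' ?u - word_prod \<sigma> ?u) * E_part \<sigma> q n lam = 0"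
      by (rule sandwich_span_len_eq_0[rotated])
    then show ?thesis
      unfolding T T' by (simp add: algebra_simps)
  qed (simp add: T T')
qed

end

section \<open>Young diagrams\<close>

lemma sum_list_take_le: "sum_list (take a ks) \<le> sum_list (ks :: nat list)"
  by (metis append_take_drop_id le_add1 sum_list_append)

lemma sum_list_take_mono: "a \<le> b \<Longrightarrow> sum_list (take a ks) \<le> sum_list (take b (ks :: nat list))"
  using sum_list_take_le[of a "take b ks"] by (simp add: min_def)

lemma cell_num_le_sum_list_take: "is_cell ks r j \<Longrightarrow> cell_num ks r j \<le> sum_list (take r ks)"
  by (cases r) (auto simp: is_cell_def cell_num_def take_Suc_conv_app_nth)

lemma cell_num_range: "is_cell ks r j \<Longrightarrow> 1 \<le> cell_num ks r j \<and> cell_num ks r j \<le> sum_list ks"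
  using cell_num_le_sum_list_take[of ks r j] sum_list_take_le[of r ks]
  by (auto simp: is_cell_def cell_num_def)

lemma cell_num_Suc [simp]: "cell_num ks r (Suc j) = Suc (cell_num ks r j)"
  by (simp add: cell_num_def)

lemma cell_num_less_row:
  assumes "is_cell ks r j" "is_cell ks r' j'" "r < r'"
  shows "cell_num ks r j < cell_num ks r' j'"
proof -
  have "cell_num ks r j \<le> sum_list (take r ks)"
    using cell_num_le_sum_list_take[OF assms(1)] .
  also have "\<dots> \<le> sum_list (take (r' - 1) ks)"
    using assms(3) by (intro sum_list_take_mono) auto
  also have "\<dots> < cell_num ks r' j'"
    using assms(2) by (simp add: cell_num_def is_cell_def)
  finally show ?thesis .
qed

lemma cell_num_less_iff:
  assumes "is_cell ks r j" "is_cell ks r' j'"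
  shows "cell_num ks r j < cell_num ks r' j' \<longleftrightarrow> r < r' \<or> (r = r' \<and> j < j')"
  using cell_num_less_row[OF assms] cell_num_less_row[OF assms(2,1)]
  by (cases r r' rule: linorder_cases) (auto simp: cell_num_def)

lemma cell_num_inj:
  "is_cell ks r j \<Longrightarrow> is_cell ks r' j' \<Longrightarrow> cell_num ks r j = cell_num ks r' j' \<Longrightarrow> r = r' \<and> j = j'"
  using cell_num_less_iff[of ks r j r' j'] cell_num_less_iff[of ks r' j' r j] by auto

lemma cell_num_surj:
  "1 \<le> x \<Longrightarrow> x \<le> sum_list ks \<Longrightarrow> \<exists>r j. is_cell ks r j \<and> x = cell_num ks r j"
proof (induction ks arbitrary: x)
  case (Cons k ks)
  show ?case
  proof (cases "x \<le> k")
    case True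
    then have "is_cell (k # ks) 1 x \<and> x = cell_num (k # ks) 1 x"
      using Cons.prems by (simp add: is_cell_def cell_num_def)
    then show ?thesis
      by blast
  next
    case False
    then have "1 \<le> x - k" "x - k \<le> sum_list ks"
      using Cons.prems by auto
    then obtain r j where rj: "is_cell ks r j" "x - k = cell_num ks r j"
      using Cons.IH by blast
    then have "is_cell (k # ks) (Suc r) j \<and> x = cell_num (k # ks) (Suc r) j"
      using False by (cases r) (auto simp: is_cell_def cell_num_def)
    then show ?thesis
      by blast
  qed
qed simp

lemma block_adjacent_iff_cell:
  "block_adjacent ks a \<longleftrightarrow> (\<exists>r j. is_cell ks r j \<and> is_cell ks r (j + 1) \<and> a = cell_num ks r j)"
proof
  assume "block_adjacent ks a"
  then obtain c where c: "c < length ks" "sum_list (take c ks) + 1 \<le> a"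
    "a < sum_list (take c ks) + ks ! c"
    unfolding block_adjacent_def by blast
  then have "is_cell ks (Suc c) (a - sum_list (take c ks))
      \<and> is_cell ks (Suc c) (a - sum_list (take c ks) + 1)
      \<and> a = cell_num ks (Suc c) (a - sum_list (take c ks))"
    by (auto simp: is_cell_def cell_num_def)
  then show "\<exists>r j. is_cell ks r j \<and> is_cell ks r (j + 1) \<and> a = cell_num ks r j"
    by blast
next
  assume "\<exists>r j. is_cell ks r j \<and> is_cell ks r (j + 1) \<and> a = cell_num ks r j"
  then obtain r j where "is_cell ks r j" "is_cell ks r (j + 1)" "a = cell_num ks r j"
    by blast
  then have "r - 1 < length ks \<and> sum_list (take (r - 1) ks) + 1 \<le> a
      \<and> a < sum_list (take (r - 1) ks) + ks ! (r - 1)"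
    by (auto simp: is_cell_def cell_num_def)
  then show "block_adjacent ks a"
    unfolding block_adjacent_def by blast
qed

definition cells :: "nat list \<Rightarrow> (nat \<times> nat) set" where
  "cells ks = {(r, j). is_cell ks r j}"

lemma card_cells: "card (cells ks) = sum_list ks"
proof -
  have "bij_betw (\<lambda>(r, j). cell_num ks r j) (cells ks) {1..sum_list ks}"
  proof (rule bij_betw_imageI)
    show "inj_on (\<lambda>(r, j). cell_num ks r j) (cells ks)"
      by (rule inj_onI) (auto simp: cells_def dest: cell_num_inj)
    show "(\<lambda>(r, j). cell_num ks r j) ` cells ks = {1..sum_list ks}"
      using cell_num_range cell_num_surj by (fastforce simp: cells_def)
  qed
  then show ?thesis
    by (simp add: bij_betw_same_card)
qed

lemma fold_max_ge: "x \<in> set xs \<Longrightarrow> (x :: nat) \<le> fold max xs a"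
proof (induction xs arbitrary: a)
  case (Cons y ys)
  have init: "b \<le> fold max zs b" for b and zs :: "nat list"
    by (induction zs arbitrary: b) (auto intro: le_trans[OF max.cobounded2])
  show ?case
    using Cons by (cases "x = y") (auto intro: le_trans[OF max.cobounded1 init])
qed simp

lemma length_filter_ge_sorted:
  "sorted_wrt (\<ge>) (xs :: nat list) \<Longrightarrow>
     r < length (filter (\<lambda>x. c \<le> x) xs) \<longleftrightarrow> r < length xs \<and> c \<le> xs ! r"
proof (induction xs arbitrary: r)
  case (Cons x xs)
  show ?case
  proof (cases "c \<le> x")
    case True
    then show ?thesis
      using Cons by (cases r) auto
  next
    case False
    then have "\<forall>y\<in>set xs. \<not> c \<le> y"
      using Cons.prems by auto
    then show ?thesis
      using False by (cases r) (auto simp: filter_empty_conv)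
  qed
qed simp

lemma nth_conj_part:
  assumes "1 \<le> c" "c \<le> fold max lam 0"
  shows "conj_part lam ! (c - 1) = length (filter (\<lambda>x. c \<le> x) lam)"
proof -
  have "[1..<Suc (fold max lam 0)] ! (c - 1) = c"
    using assms by (subst nth_upt) auto
  then show ?thesis
    unfolding conj_part_def using assms by (subst nth_map) auto
qed

lemma is_cell_conj_part_iff:
  assumes "is_partition n lam"
  shows "is_cell (conj_part lam) c r \<longleftrightarrow> is_cell lam r c"
proof -
  have sorted: "sorted_wrt (\<ge>) lam"
    using assms by (simp add: is_partition_def)
  have "c \<le> fold max lam 0" if "is_cell lam r c"
    using that fold_max_ge[of "lam ! (r - 1)" lam 0] by (auto simp: is_cell_def)
  then show ?thesis
    using length_filter_ge_sorted[OF sorted, of "r - 1" c] nth_conj_part[of c lam]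
    by (auto simp: is_cell_def conj_part_def)
qed

lemma sum_list_conj_part:
  assumes "is_partition n lam"
  shows "sum_list (conj_part lam) = n"
proof -
  have "bij_betw (\<lambda>(r, c). (c, r)) (cells lam) (cells (conj_part lam))"
    by (rule bij_betw_imageI) (auto simp: cells_def is_cell_conj_part_iff[OF assms] inj_on_def)
  then show ?thesis
    using card_cells[of lam] card_cells[of "conj_part lam"] assms
    by (simp add: bij_betw_same_card is_partition_def)
qed

lemma pi_part_cell:
  assumes "is_cell lam r c"
  shows "pi_part lam (cell_num lam r c) = cell_num (conj_part lam) c r"
proof -
  have "(THE j. \<exists>r' c'. is_cell lam r' c' \<and> cell_num lam r c = cell_num lam r' c'
          \<and> j = cell_num (conj_part lam) c' r') = cell_num (conj_part lam) c r"
    using assms cell_num_inj[OF assms] by (intro the_equality) blast+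
  then show ?thesis
    unfolding pi_part_def using assms by auto
qed

lemma permutes_pi_part:
  assumes partition: "is_partition n lam"
  shows "pi_part lam permutes {1..n}"
proof (rule bij_imp_permutes)
  let ?mu = "conj_part lam"
  have n: "sum_list lam = n" "sum_list ?mu = n"
    using partition sum_list_conj_part[OF partition] by (simp_all add: is_partition_def)
  have cell_of: "\<exists>r c. is_cell lam r c \<and> x = cell_num lam r c" if "x \<in> {1..n}" for x
    using cell_num_surj that n by auto
  have "pi_part lam ` {1..n} \<subseteq> {1..n}"
    using cell_of pi_part_cell cell_num_range[of ?mu] n is_cell_conj_part_iff[OF partition]
    by fastforce
  moreover have "inj_on (pi_part lam) {1..n}"
  proof (rule inj_onI)
    fix x x' assume "x \<in> {1..n}" "x' \<in> {1..n}" and eq: "pi_part lam x = pi_part lam x'"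
    then obtain r c r' c' where "is_cell lam r c" "x = cell_num lam r c"
      "is_cell lam r' c'" "x' = cell_num lam r' c'"
      using cell_of by blast
    then show "x = x'"
      using eq cell_num_inj[of ?mu c r c' r'] pi_part_cell is_cell_conj_part_iff[OF partition]
      by auto
  qed
  ultimately show "bij_betw (pi_part lam) {1..n} {1..n}"
    by (simp add: bij_betw_def endo_inj_surj)
  show "pi_part lam x = x" if "x \<notin> {1..n}" for x
    using that cell_num_range n by (fastforce simp: pi_part_def)
qed

lemma inv_pi_part_cell:
  assumes "is_partition n lam" "is_cell lam r c"
  shows "inv (pi_part lam) (cell_num (conj_part lam) c r) = cell_num lam r c"
  using pi_part_cell[OF assms(2)] permutes_inv_eq[OF permutes_pi_part[OF assms(1)]] by blast

section \<open>The distinguished permutation transposes the diagram\<close>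

locale distinguished =
  fixes n :: nat and lam :: "nat list" and y :: "nat \<Rightarrow> nat"
  assumes partition: "is_partition n lam" and y: "y permutes {1..n}"
    and distinguished: "distinguished_perm (conj_part lam) lam y"
begin

abbreviation mu :: "nat list" where
  "mu \<equiv> conj_part lam"

lemma cell_transpose: "is_cell mu c i \<longleftrightarrow> is_cell lam i c"
  using is_cell_conj_part_iff[OF partition] .

lemma sum_list_lam: "sum_list lam = n" and sum_list_mu: "sum_list mu = n"
  using partition sum_list_conj_part[OF partition] by (simp_all add: is_partition_def)

lemma y_inj: "y a = y b \<Longrightarrow> a = b"
  using permutes_inj[OF y] by (rule injD)

lemma y_ascent:
  assumes "is_cell mu c i" "is_cell mu c (i + 1)"
  shows "y (cell_num mu c i) < y (cell_num mu c (i + 1))"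
proof -
  have "block_adjacent mu (cell_num mu c i)"
    using assms block_adjacent_iff_cell by blast
  then show ?thesis
    using distinguished by (simp add: distinguished_perm_def)
qed

lemma inv_y_ascent:
  assumes "is_cell lam r j" "is_cell lam r (j + 1)"
  shows "inv y (cell_num lam r j) < inv y (cell_num lam r (j + 1))"
proof -
  have "block_adjacent lam (cell_num lam r j)"
    using assms block_adjacent_iff_cell by blast
  then show ?thesis
    using distinguished by (simp add: distinguished_perm_def)
qed

lemma no_adjacent_pair:
  assumes "is_cell mu c i" "is_cell mu c (i + 1)" "is_cell lam r j" "is_cell lam r (j + 1)"
    and "y (cell_num mu c i) = cell_num lam r j"
  shows "y (cell_num mu c (i + 1)) \<noteq> cell_num lam r (j + 1)"
proof -
  have "block_adjacent mu (cell_num mu c i)" "block_adjacent lam (cell_num lam r j)"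
    using assms block_adjacent_iff_cell by blast+
  then have "\<not> (y (cell_num mu c i) = cell_num lam r j
      \<and> y (cell_num mu c i + 1) = cell_num lam r j + 1)"
    using distinguished unfolding distinguished_perm_def by blast
  then show ?thesis
    using assms(5) by simp
qed

lemma y_cell:
  assumes "is_cell mu c i"
  obtains r j where "is_cell lam r j" "y (cell_num mu c i) = cell_num lam r j"
proof -
  have "cell_num mu c i \<in> {1..n}"
    using cell_num_range[OF assms] sum_list_mu by simp
  then have "y (cell_num mu c i) \<in> {1..n}"
    using permutes_in_image[OF y] by blast
  then show ?thesis
    using that cell_num_surj sum_list_lam by (metis atLeastAtMost_iff)
qed

lemma inv_y_cell:
  assumes "is_cell lam r j"
  obtains c i where "is_cell mu c i" "inv y (cell_num lam r j) = cell_num mu c i"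
proof -
  have "cell_num lam r j \<in> {1..n}"
    using cell_num_range[OF assms] sum_list_lam by simp
  then have "inv y (cell_num lam r j) \<in> {1..n}"
    using permutes_in_image[OF permutes_inv[OF y]] by blast
  then show ?thesis
    using that cell_num_surj sum_list_mu by (metis atLeastAtMost_iff)
qed

lemma inv_y_row_mono:
  assumes "is_cell lam r j" "is_cell lam r j'" "j < j'"
  shows "inv y (cell_num lam r j) < inv y (cell_num lam r j')"
proof -
  obtain d where j': "j' = j + Suc d"
    using assms(3) less_iff_Suc_add by auto
  have "is_cell lam r (j + Suc d) \<Longrightarrow> inv y (cell_num lam r j) < inv y (cell_num lam r (j + Suc d))"
  proof (induction d)
    case 0
    then show ?case
      using inv_y_ascent[OF assms(1)] by simp
  next
    case (Suc d)
    then have "is_cell lam r (j + Suc d)"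
      using assms(1) by (auto simp: is_cell_def)
    then show ?case
      using Suc inv_y_ascent[of r "j + Suc d"] by simp
  qed
  then show ?thesis
    using assms(2) j' by simp
qed

text \<open>A step within one row of \<open>lam\<close> would contradict either the monotonicity of \<open>inv y\<close>
  along that row or the absence of adjacent pairs.\<close>
lemma y_rows_increase:
  assumes ci: "is_cell mu c i" "is_cell mu c (i + 1)"
    and rj: "is_cell lam r1 j1" "is_cell lam r2 j2"
    and y1: "y (cell_num mu c i) = cell_num lam r1 j1"
    and y2: "y (cell_num mu c (i + 1)) = cell_num lam r2 j2"
  shows "r1 < r2"
proof (rule ccontr)
  assume "\<not> r1 < r2"
  have "cell_num lam r1 j1 < cell_num lam r2 j2"
    using y_ascent[OF ci] y1 y2 by simp
  then have r: "r2 = r1" "j1 < j2"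
    using cell_num_less_iff[OF rj] \<open>\<not> r1 < r2\<close> by auto
  have inv_y: "inv y (cell_num lam r1 j1) = cell_num mu c i"
    "inv y (cell_num lam r1 j2) = cell_num mu c i + 1"
    using y1 y2 r permutes_inv_eq[OF y] by (auto simp:)
  show False
  proof (cases "j2 = j1 + 1")
    case True
    then show False
      using no_adjacent_pair[OF ci rj(1)] rj(2) r y1 y2 by simp
  next
    case False
    then have mid: "is_cell lam r1 (j1 + 1)" "j1 + 1 < j2"
      using rj r by (auto simp: is_cell_def)
    show False
      using inv_y_row_mono[OF rj(1) mid(1)] inv_y_row_mono[OF mid(1) _ mid(2)] rj(2) r inv_y
      by simp
  qed
qed

lemma y_rows_above:
  assumes "is_cell mu c i" "is_cell lam r j" "y (cell_num mu c i) = cell_num lam r j" "i < r"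
  shows "is_cell mu c (i + d) \<Longrightarrow> is_cell lam r' j' \<Longrightarrow> y (cell_num mu c (i + d)) = cell_num lam r' j'
    \<Longrightarrow> i + d < r'"
proof (induction d arbitrary: r' j')
  case 0
  then show ?case
    using assms cell_num_inj[of lam r j r' j'] y_inj by auto
next
  case (Suc d)
  then have cd: "is_cell mu c (i + d)"
    using assms(1) by (auto simp: is_cell_def)
  obtain r'' j'' where "is_cell lam r'' j''" "y (cell_num mu c (i + d)) = cell_num lam r'' j''"
    using y_cell[OF cd] .
  then show ?case
    using Suc.IH[OF cd] y_rows_increase[OF cd _ _ Suc.prems(2)] Suc.prems(1,3) by fastforce
qed

definition agrees_before :: "nat \<Rightarrow> nat \<Rightarrow> bool" where
  "agrees_before c i \<longleftrightarrow> (\<forall>c' i'. is_cell mu c' i' \<longrightarrow> (c' < c \<or> c' = c \<and> i' < i)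
     \<longrightarrow> y (cell_num mu c' i') = cell_num lam i' c')"

lemma image_column_ge:
  assumes "agrees_before c i" "is_cell mu c i'" "is_cell lam r' j'"
    and "y (cell_num mu c i') = cell_num lam r' j'"
  shows "c \<le> j'"
proof (rule ccontr)
  assume "\<not> c \<le> j'"
  moreover have "is_cell mu j' r'"
    using assms(3) cell_transpose by simp
  ultimately have "y (cell_num mu j' r') = y (cell_num mu c i')"
    using assms(1,4) by (simp add: agrees_before_def)
  then show False
    using cell_num_inj[OF \<open>is_cell mu j' r'\<close> assms(2)] y_inj \<open>\<not> c \<le> j'\<close> by blast
qed

lemma image_row_ge:
  assumes "agrees_before c i" "is_cell mu c i" "is_cell lam r j"
    and "y (cell_num mu c i) = cell_num lam r j"
  shows "i \<le> r"
proof (cases "i = 1")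
  case False
  then have prev: "is_cell mu c (i - 1)" "i = (i - 1) + 1"
    using assms(2) by (auto simp: is_cell_def)
  then have "y (cell_num mu c (i - 1)) = cell_num lam (i - 1) c"
    using assms(1) by (simp add: agrees_before_def)
  then have "i - 1 < r"
    using y_rows_increase[of c "i - 1"] prev assms cell_transpose by metis
  then show ?thesis
    by simp
qed (use assms(3) in \<open>simp add: is_cell_def\<close>)

lemma image_row_eq:
  assumes "agrees_before c i" "is_cell mu c i" "is_cell lam r j"
    and "y (cell_num mu c i) = cell_num lam r j"
  shows "r = i"
proof (rule ccontr)
  assume "r \<noteq> i"
  then have "i < r"
    using image_row_ge[OF assms] by simp
  define M where "M = mu ! (c - 1)"
  have top: "is_cell mu c M" "i \<le> M"
    using assms(2) by (auto simp: is_cell_def M_def)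
  obtain r' j' where rj': "is_cell lam r' j'" "y (cell_num mu c M) = cell_num lam r' j'"
    using y_cell[OF top(1)] .
  have "i + (M - i) < r'"
    using y_rows_above[OF assms(2-4) \<open>i < r\<close>, of "M - i"] top rj' by simp
  moreover have "is_cell lam r' c"
    using image_column_ge[OF assms(1) top(1) rj'] rj'(1) assms(2) by (auto simp: is_cell_def)
  then have "is_cell mu c r'"
    using cell_transpose by simp
  then have "r' \<le> M"
    by (simp add: is_cell_def M_def)
  ultimately show False
    using top(2) by simp
qed

lemma image_column_eq:
  assumes before: "agrees_before c i" and ci: "is_cell mu c i" "is_cell lam i j"
    and image: "y (cell_num mu c i) = cell_num lam i j"
  shows "j = c"
proof (rule ccontr)
  assume "j \<noteq> c"
  then have "c < j"
    using image_column_ge[OF before ci(1) ci(2) image] by simp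
  have cc: "is_cell lam i c"
    using ci(1) cell_transpose by simp
  obtain c0 i0 where ci0: "is_cell mu c0 i0" "inv y (cell_num lam i c) = cell_num mu c0 i0"
    using inv_y_cell[OF cc] .
  have "inv y (cell_num lam i j) = cell_num mu c i"
    using image permutes_inv_eq[OF y] by metis
  then have less: "cell_num mu c0 i0 < cell_num mu c i"
    using inv_y_row_mono[OF cc ci(2) \<open>c < j\<close>] ci0(2) by simp
  then have "c0 < c \<or> c0 = c \<and> i0 < i"
    using cell_num_less_iff[OF ci0(1) ci(1)] by simp
  then have "y (cell_num mu c0 i0) = cell_num lam i0 c0"
    using before ci0(1) unfolding agrees_before_def by blast
  moreover have "y (cell_num mu c0 i0) = cell_num lam i c"
    using ci0(2) permutes_inverses(1)[OF y] by metis
  ultimately have "i0 = i \<and> c0 = c"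
    using cell_num_inj[of lam i0 c0 i c] ci0(1) cell_transpose cc by auto
  then show False
    using less by simp
qed

lemma y_cell_transpose: "is_cell mu c i \<Longrightarrow> y (cell_num mu c i) = cell_num lam i c"
proof (induction "cell_num mu c i" arbitrary: c i rule: less_induct)
  case less
  have before: "agrees_before c i"
    unfolding agrees_before_def using less.hyps cell_num_less_iff[OF _ less.prems] by blast
  obtain r j where rj: "is_cell lam r j" "y (cell_num mu c i) = cell_num lam r j"
    using y_cell[OF less.prems] .
  then have "r = i"
    using image_row_eq[OF before less.prems] by blast
  then show ?case
    using image_column_eq[OF before less.prems] rj by simp
qed

lemma y_eq_inv_pi_part: "y = inv (pi_part lam)"
proof
  fix z
  show "y z = inv (pi_part lam) z"
  proof (cases "z \<in> {1..n}")
    case True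
    then obtain c i where "is_cell mu c i" "z = cell_num mu c i"
      using cell_num_surj sum_list_mu by (metis atLeastAtMost_iff)
    then show ?thesis
      using y_cell_transpose inv_pi_part_cell[OF partition] cell_transpose by simp
  next
    case False
    then show ?thesis
      using permutes_not_in[OF y] permutes_not_in[OF permutes_inv[OF permutes_pi_part[OF partition]]]
      by simp
  qed
qed

end

theorem lemma3p5:
  fixes \<sigma> \<sigma>' :: "nat \<Rightarrow> 'a::ring_1" and q qi x :: 'a and n :: nat and lam :: "nat list"
  assumes "q * qi = 1" and "qi * q = 1" and "\<forall>y. q * y = y * q"
    and "\<forall>i. 1 \<le> i \<and> i < n \<longrightarrow> \<sigma> i * \<sigma>' i = 1 \<and> \<sigma>' i * \<sigma> i = 1"
    and "\<forall>i. 1 \<le> i \<and> i < n \<longrightarrow> (\<sigma> i - q) * (\<sigma> i + qi) = 0"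
    and "\<forall>i j. 1 \<le> i \<and> i + 1 < j \<and> j < n \<longrightarrow> \<sigma> i * \<sigma> j = \<sigma> j * \<sigma> i"
    and "\<forall>i. 1 \<le> i \<and> i + 1 < n \<longrightarrow>
           \<sigma> i * \<sigma> (i + 1) * \<sigma> i = \<sigma> (i + 1) * \<sigma> i * \<sigma> (i + 1)"
    and "is_partition n lam"
    and "x * pbraid \<sigma> n (pi_part lam) = 1" and "pbraid \<sigma> n (pi_part lam) * x = 1"
  shows "F_part \<sigma> qi n (conj_part lam) * pbraid \<sigma> n (inv (pi_part lam)) * E_part \<sigma> q n lam
           = F_part \<sigma> qi n (conj_part lam) * pbraid \<sigma>' n (inv (pi_part lam)) * E_part \<sigma> q n lam
       \<and> F_part \<sigma> qi n (conj_part lam) * pbraid \<sigma>' n (inv (pi_part lam)) * E_part \<sigma> q n lam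
           = F_part \<sigma> qi n (conj_part lam) * x * E_part \<sigma> q n lam"
proof -
  interpret hecke \<sigma> \<sigma>' q qi n
    using assms(1-7) by unfold_locales (auto simp: braid_relations_def)
  have pi: "pi_part lam permutes {1..n}"
    using permutes_pi_part[OF assms(8)] .
  have "sum_list lam \<le> n" "sum_list (conj_part lam) \<le> n"
    using assms(8) sum_list_conj_part[OF assms(8)] by (simp_all add: is_partition_def)
  moreover have "y = inv (pi_part lam)"
    if "y permutes {1..n}" "distinguished_perm (conj_part lam) lam y" for y
    using distinguished.y_eq_inv_pi_part[OF distinguished.intro[OF assms(8) that]] .
  ultimately have "F_part \<sigma> qi n (conj_part lam) * T (inv (pi_part lam)) * E_part \<sigma> q n lam
      = F_part \<sigma> qi n (conj_part lam) * pbraid \<sigma>' n (inv (pi_part lam)) * E_part \<sigma> q n lam"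
    by (intro F_T_E_eq_F_T'_E permutes_inv[OF pi])
  moreover have "pbraid \<sigma>' n (inv (pi_part lam)) = x"
  proof -
    have "pbraid \<sigma>' n (inv (pi_part lam)) * T (pi_part lam) = 1"
      using pbraid_inv_mult_pbraid[OF braid braid_relations_sigma' _ pi] sigma_inverse by blast
    then show ?thesis
      using assms(10) by (metis mult.assoc mult.left_neutral mult.right_neutral)
  qed
  ultimately show ?thesis
    by simp
qed

end
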